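(* Let $\lambda>0$ and consider the type II AWGN wiretap channel AWGN-WT($\lambda$). Let $\{\mathcal{C}(n)\}$ be either the Tornado LDPC code sequence or the right-regular LDPC code sequence (capacity-achieving for binary erasure channels), let $\mathcal{C}_0(n)=\{0,1\}^n$ and $\mathcal{C}_1(n)=\mathcal{C}^{\perp}(n)$. Then, using the secure nested code sequence $\{\mathcal{C}_0(n),\mathcal{C}_1(n)\}$ over AWGN-WT($\lambda$), perfect secrecy can be achieved at (and below) the transmission rate $2Q(\sqrt{2\lambda})$, where $Q(x)=\int_x^\infty\frac{1}{\sqrt{2\pi}}e^{-z^2/2}\,dz$; i.e., $(R,R_e)=(R,R)$ is achievable for every $R\le 2Q(\sqrt{2\lambda})$.
   Context: Type II AWGN wiretap channel AWGN-WT($\lambda$): binary input (mapped to $\pm1$), noiseless main channel, eavesdropper channel memoryless binary-input AWGN with output densities $g(z|X=1)=\frac{1}{\sqrt{2\pi}}\exp[-(z+\sqrt{2\lambda})^2/2]$, $g(z|X=-1)=\frac{1}{\sqrt{2\pi}}\exp[-(z-\sqrt{2\lambda})^2/2]$. The Tornado and right-regular sequences (Oswald–Shokrollahi) are LDPC code sequences which, for the chosen rate $R_c\in(0,1)$, have erasure rate threshold $\delta^\star=1-R_c$ over binary erasure channels (the erasure rate threshold being the largest erasure probability at which word error probability tends to zero as $n\to\infty$). Dual code: $\mathcal{C}^\perp(n)=\{\mathbf{x}\in\{0,1\}^n:\mathbf{x}\cdot\mathbf{y}=0\ \forall\mathbf{y}\in\mathcal{C}(n)\}$. Secure nested code: cosets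 of $\mathcal{C}_1(n)$ in $\mathcal{C}_0(n)$ index the uniform messages $W$; a message is sent as a uniformly random codeword of its coset; information rate $R_0-R_1$. A pair $(R,R_e)$ is achievable if there is a rate-$R$ code sequence with legitimate-receiver error probability tending to $0$ and $R_e\le\lim_{n\to\infty}H(W|\mathbf{Z})/n$ ($\mathbf{Z}$ the eavesdropper output); perfect secrecy at rate $R$ means $(R,R)$ is achievable. *)

theory Defs
  imports "HOL-Probability.Probability"
begin

text \<open>A binary vector of length n is a function nat => bool vanishing outside {..<n}
  (True = bit 1, False = bit 0).\<close>

definition vecs :: "nat \<Rightarrow> (nat \<Rightarrow> bool) set" where
  "vecs n = {x. \<forall>i\<ge>n. \<not> x i}"

definition vxor :: "(nat \<Rightarrow> bool) \<Rightarrow> (nat \<Rightarrow> bool) \<Rightarrow> (nat \<Rightarrow> bool)" where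
  "vxor x y = (\<lambda>i. x i \<noteq> y i)"

definition linear_code :: "nat \<Rightarrow> (nat \<Rightarrow> bool) set \<Rightarrow> bool" where
  "linear_code n C \<longleftrightarrow> C \<subseteq> vecs n \<and> (\<lambda>_. False) \<in> C \<and> (\<forall>x\<in>C. \<forall>y\<in>C. vxor x y \<in> C)"

definition dot_zero :: "nat \<Rightarrow> (nat \<Rightarrow> bool) \<Rightarrow> (nat \<Rightarrow> bool) \<Rightarrow> bool" where
  "dot_zero n x y \<longleftrightarrow> even (card {i\<in>{..<n}. x i \<and> y i})"

definition dual_code :: "nat \<Rightarrow> (nat \<Rightarrow> bool) set \<Rightarrow> (nat \<Rightarrow> bool) set" where
  "dual_code n C = {x\<in>vecs n. \<forall>y\<in>C. dot_zero n x y}"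

definition code_rate :: "nat \<Rightarrow> (nat \<Rightarrow> bool) set \<Rightarrow> real" where
  "code_rate n C = log 2 (real (card C)) / real n"

text \<open>Uniform codeword, BEC with erasure probability d; erasure pattern E \<subseteq> {..<n}.
  Given the unerased positions, the optimal decoder picks uniformly among the codewords
  consistent with the observation, and errs with probability 1 - 1/(number of consistent
  codewords).\<close>
definition bec_word_error :: "nat \<Rightarrow> (nat \<Rightarrow> bool) set \<Rightarrow> real \<Rightarrow> real" where
  "bec_word_error n C d =
     (\<Sum>E\<in>Pow {..<n}. d ^ card E * (1 - d) ^ (n - card E) *
        ((1 / real (card C)) * (\<Sum>x\<in>C.
           (1 - 1 / real (card {c\<in>C. \<forall>i<n. i \<notin> E \<longrightarrow> c i = x i})))))"

definition erasure_threshold :: "(nat \<Rightarrow> (nat \<Rightarrow> bool) set) \<Rightarrow> real" where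
  "erasure_threshold C =
     Sup {d\<in>{0..1}. (\<lambda>n. bec_word_error n (C n) d) \<longlonglongrightarrow> 0}"

definition Qfun :: "real \<Rightarrow> real" where
  "Qfun x = (\<integral>z. indicator {x..} z * (exp (- z\<^sup>2 / 2) / sqrt (2 * pi)) \<partial>lborel)"

definition g_awgn :: "real \<Rightarrow> bool \<Rightarrow> real \<Rightarrow> real" where
  "g_awgn lam b z =
     (if b then exp (- (z - sqrt (2 * lam))\<^sup>2 / 2) / sqrt (2 * pi)
           else exp (- (z + sqrt (2 * lam))\<^sup>2 / 2) / sqrt (2 * pi))"

definition out_space :: "nat \<Rightarrow> (nat \<Rightarrow> real) measure" where
  "out_space n = PiM {..<n} (\<lambda>_. lborel)"

definition word_density :: "real \<Rightarrow> nat \<Rightarrow> (nat \<Rightarrow> bool) \<Rightarrow> (nat \<Rightarrow> real) \<Rightarrow> real" where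
  "word_density lam n x z = (\<Prod>i<n. g_awgn lam (x i) (z i))"

text \<open>Cosets of C1 in C0; they index the messages W.\<close>
definition cosets :: "(nat \<Rightarrow> bool) set \<Rightarrow> (nat \<Rightarrow> bool) set \<Rightarrow> (nat \<Rightarrow> bool) set set" where
  "cosets C0 C1 = (\<lambda>x. vxor x ` C1) ` C0"

definition msg_density :: "real \<Rightarrow> nat \<Rightarrow> (nat \<Rightarrow> bool) set \<Rightarrow> (nat \<Rightarrow> real) \<Rightarrow> real" where
  "msg_density lam n w z = (1 / real (card w)) * (\<Sum>x\<in>w. word_density lam n x z)"

text \<open>Conditional entropy H(W|Z) in bits, W uniform over the cosets.\<close>
definition equivocation :: "real \<Rightarrow> nat \<Rightarrow> (nat \<Rightarrow> bool) set \<Rightarrow> (nat \<Rightarrow> bool) set \<Rightarrow> real" where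
  "equivocation lam n C0 C1 =
     (let M = real (card (cosets C0 C1));
          pz = (\<lambda>z. (1 / M) * (\<Sum>w\<in>cosets C0 C1. msg_density lam n w z))
      in \<integral>z. (\<Sum>w\<in>cosets C0 C1. (msg_density lam n w z / M) *
               (- log 2 ((msg_density lam n w z / M) / pz z))) \<partial>out_space n)"

definition nested_rate :: "nat \<Rightarrow> (nat \<Rightarrow> bool) set \<Rightarrow> (nat \<Rightarrow> bool) set \<Rightarrow> real" where
  "nested_rate n C0 C1 = code_rate n C0 - code_rate n C1"

text \<open>Legitimate receiver (noiseless main channel): it observes x and decodes the coset
  containing x (if unique, otherwise an arbitrary coset).  Error probability with uniform W.\<close>
definition legit_decode :: "(nat \<Rightarrow> bool) set \<Rightarrow> (nat \<Rightarrow> bool) set \<Rightarrow> (nat \<Rightarrow> bool) \<Rightarrow> (nat \<Rightarrow> bool) set" where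
  "legit_decode C0 C1 x = (SOME w. w \<in> cosets C0 C1 \<and> x \<in> w)"

definition legit_error :: "(nat \<Rightarrow> bool) set \<Rightarrow> (nat \<Rightarrow> bool) set \<Rightarrow> real" where
  "legit_error C0 C1 =
     (1 / real (card (cosets C0 C1))) *
     (\<Sum>w\<in>cosets C0 C1. (1 / real (card w)) *
        (\<Sum>x\<in>w. if legit_decode C0 C1 x = w then 0 else 1))"

definition achievable_nested ::
  "real \<Rightarrow> (nat \<Rightarrow> (nat \<Rightarrow> bool) set) \<Rightarrow> (nat \<Rightarrow> (nat \<Rightarrow> bool) set) \<Rightarrow> real \<Rightarrow> real \<Rightarrow> bool" where
  "achievable_nested lam C0 C1 R Req \<longleftrightarrow>
     (\<lambda>n. nested_rate n (C0 n) (C1 n)) \<longlonglongrightarrow> R \<and>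
     (\<lambda>n. legit_error (C0 n) (C1 n)) \<longlonglongrightarrow> 0 \<and>
     convergent (\<lambda>n. equivocation lam n (C0 n) (C1 n) / real n) \<and>
     Req \<le> lim (\<lambda>n. equivocation lam n (C0 n) (C1 n) / real n)"

end

(* Every likelihood of the eavesdropper's channel splits as min(g(z|0), g(z|1)) plus a gap
   term carried by the more likely bit, so the channel is a mixture of an erasure channel and
   a noiseless one; integrated over z, a position is seen through the noiseless part with
   probability alpha = 1 - 2 Q(sqrt(2 lam)) <= 1 - R.  Fix the set U of such positions.  A
   character-sum count shows that a coset of the dual code contains at most the fraction
   |C supported on U| / |C| of the vectors with a given pattern on U, and Gibbs' inequality
   turns this into the pointwise bound H(W | Z = z) >= log |C| - log |C supported on U| on
   average over U.  The subtracted term is the equivocation of a uniform codeword of C sent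
   over a binary erasure channel that erases U; it is at most 2n times the BEC word error
   probability and is n-Lipschitz in the erasure probability, so it is o(n) below the erasure
   threshold 1 - R.  Hence H(W|Z)/n tends to R = lim log |C| / n, the rate of the nested
   code. *)

theory Submission
  imports Defs
begin

section \<open>Binary vectors and characters\<close>

definition vecs_on :: "nat set \<Rightarrow> (nat \<Rightarrow> bool) set" where
  "vecs_on S = {x. \<forall>i. i \<notin> S \<longrightarrow> \<not> x i}"

lemma vecs_eq_vecs_on: "vecs n = vecs_on {..<n}"
  unfolding vecs_def vecs_on_def by auto

lemma bij_betw_vecs_on_Pow: "bij_betw (\<lambda>x. {i. x i}) (vecs_on S) (Pow S)"
  by (rule bij_betwI[where g="\<lambda>A i. i \<in> A"]) (auto simp: vecs_on_def)

lemma finite_vecs_on: "finite S \<Longrightarrow> finite (vecs_on S)"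
  using bij_betw_vecs_on_Pow[of S] bij_betw_finite by blast

lemma card_vecs_on: "finite S \<Longrightarrow> card (vecs_on S) = 2 ^ card S"
  using bij_betw_same_card[OF bij_betw_vecs_on_Pow[of S]] by (simp add: card_Pow)

lemma finite_vecs: "finite (vecs n)"
  unfolding vecs_eq_vecs_on by (simp add: finite_vecs_on)

lemma card_vecs: "card (vecs n) = 2 ^ n"
  unfolding vecs_eq_vecs_on by (simp add: card_vecs_on)

lemma vxor_cancel_right: "vxor (vxor x y) y = x"
  unfolding vxor_def by auto

lemma vxor_cancel_left: "vxor x (vxor x y) = y"
  unfolding vxor_def by auto

lemma vxor_self [simp]: "vxor x x = (\<lambda>_. False)"
  unfolding vxor_def by simp

lemma vxor_vecs_on: "x \<in> vecs_on S \<Longrightarrow> y \<in> vecs_on S \<Longrightarrow> vxor x y \<in> vecs_on S"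
  unfolding vecs_on_def vxor_def by auto

lemma inj_on_vxor: "inj_on (vxor x) A"
  by (rule inj_onI) (metis vxor_cancel_left)

lemma inj_on_vxor_right: "inj_on (\<lambda>y. vxor y x) A"
  by (rule inj_onI) (metis vxor_cancel_right)

lemma sum_eq_zero_by_sign_involution:
  fixes g :: "'a \<Rightarrow> real"
  assumes "\<forall>x\<in>A. f x \<in> A" "\<forall>x\<in>A. f (f x) = x" "\<forall>x\<in>A. g (f x) = - g x"
  shows "sum g A = 0"
proof -
  have "bij_betw f A A"
    by (rule bij_betwI[where g=f]) (use assms in auto)
  then have "sum g A = sum (g \<circ> f) A"
    by (simp add: sum.reindex_bij_betw)
  also have "\<dots> = - sum g A"
    using assms(3) by (simp add: sum_negf[symmetric])
  finally show ?thesis by simp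
qed

lemma dot_zero_commute: "dot_zero n x y \<longleftrightarrow> dot_zero n y x"
  unfolding dot_zero_def by (simp add: conj_commute)

lemma dot_zero_vxor:
  "dot_zero n x (vxor y z) \<longleftrightarrow> (dot_zero n x y \<longleftrightarrow> dot_zero n x z)"
proof -
  let ?c = "\<lambda>P. card {i\<in>{..<n}. P i}"
  have card_eq_sum: "?c P = (\<Sum>i<n. if P i then 1 else 0)" for P
    by (subst sum.inter_filter[symmetric]) auto
  have "?c (\<lambda>i. x i \<and> vxor y z i) + 2 * ?c (\<lambda>i. x i \<and> y i \<and> z i)
      = ?c (\<lambda>i. x i \<and> y i) + ?c (\<lambda>i. x i \<and> z i)"
    unfolding card_eq_sum sum_distrib_left sum.distrib[symmetric]
    by (rule sum.cong) (auto simp: vxor_def)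
  from arg_cong[where f=even, OF this] show ?thesis
    unfolding dot_zero_def by simp
qed

lemma dot_zero_zero [simp]: "dot_zero n x (\<lambda>_. False)"
  unfolding dot_zero_def by simp

definition character :: "nat \<Rightarrow> (nat \<Rightarrow> bool) \<Rightarrow> (nat \<Rightarrow> bool) \<Rightarrow> real" where
  "character n x y = (if dot_zero n x y then 1 else -1)"

lemma character_vxor_right: "character n x (vxor y z) = character n x y * character n x z"
  unfolding character_def using dot_zero_vxor[of n x y z] by auto

lemma character_vxor_left: "character n (vxor x x') y = character n x y * character n x' y"
  using character_vxor_right[of n y x x'] by (simp add: character_def dot_zero_commute)

lemma linear_code_finite: "linear_code n C \<Longrightarrow> finite C"
  unfolding linear_code_def using finite_vecs finite_subset by blast

lemma linear_code_card_pos: "linear_code n C \<Longrightarrow> card C > 0"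
  using linear_code_finite[of n C] unfolding linear_code_def by (auto simp: card_gt_0_iff)

lemma sum_character_vecs_on:
  assumes S: "S \<subseteq> {..<n}" and y: "y \<in> vecs_on S"
  shows "(\<Sum>x\<in>vecs_on S. character n x y) = (if y = (\<lambda>_. False) then 2 ^ card S else 0)"
proof (cases "y = (\<lambda>_. False)")
  case True
  then show ?thesis
    using S by (simp add: character_def card_vecs_on finite_subset)
next
  case False
  then obtain j where j: "y j" by auto
  with y S have jS: "j \<in> S" and "j < n" unfolding vecs_on_def by auto
  define e where "e = (\<lambda>i. i = j)"
  have "e \<in> vecs_on S" using jS unfolding e_def vecs_on_def by auto
  moreover have "{i\<in>{..<n}. e i \<and> y i} = {j}" using j \<open>j < n\<close> unfolding e_def by auto
  then have "character n e y = -1" unfolding character_def dot_zero_def by simp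
  ultimately have "(\<Sum>x\<in>vecs_on S. character n x y) = 0"
    by (intro sum_eq_zero_by_sign_involution[where f="\<lambda>x. vxor x e"])
      (auto simp: vxor_vecs_on vxor_cancel_right character_vxor_left)
  then show ?thesis using False by simp
qed

lemma sum_character_linear_code:
  assumes V: "linear_code n V"
  shows "(\<Sum>y\<in>V. character n x y) = (if \<forall>y\<in>V. dot_zero n x y then real (card V) else 0)"
proof (cases "\<forall>y\<in>V. dot_zero n x y")
  case True
  then show ?thesis by (simp add: character_def)
next
  case False
  then obtain y0 where "y0 \<in> V" "\<not> dot_zero n x y0" by auto
  with V have "(\<Sum>y\<in>V. character n x y) = 0"
    by (intro sum_eq_zero_by_sign_involution[where f="\<lambda>y. vxor y y0"])
      (auto simp: linear_code_def vxor_cancel_right character_def dot_zero_vxor)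
  then show ?thesis by (simp only: if_not_P[OF False])
qed

text \<open>Double counting of the character sum over vecs_on S \<times> V, with the orthogonality
  relations of the characters applied in either order of summation.\<close>

lemma card_annihilator_mult_card:
  assumes S: "S \<subseteq> {..<n}" and V: "linear_code n V" "V \<subseteq> vecs_on S"
  shows "card {x\<in>vecs_on S. \<forall>y\<in>V. dot_zero n x y} * card V = 2 ^ card S"
proof -
  define A where "A = {x\<in>vecs_on S. \<forall>y\<in>V. dot_zero n x y}"
  have fin: "finite (vecs_on S)" using S finite_vecs_on finite_subset by blast
  have "vecs_on S \<inter> A = A"
    unfolding A_def by blast
  then have "real (card A) * real (card V) = (\<Sum>x\<in>vecs_on S. if x \<in> A then real (card V) else 0)"
    using fin by (simp add: sum.If_cases)
  also have "\<dots> = (\<Sum>x\<in>vecs_on S. \<Sum>y\<in>V. character n x y)"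
    using V(1) by (intro sum.cong refl) (simp add: A_def sum_character_linear_code)
  also have "\<dots> = (\<Sum>y\<in>V. \<Sum>x\<in>vecs_on S. character n x y)"
    by (rule sum.swap)
  also have "\<dots> = (\<Sum>y\<in>V. if y = (\<lambda>_. False) then 2 ^ card S else 0)"
    using S V(2) by (intro sum.cong) (auto simp: sum_character_vecs_on)
  also have "\<dots> = 2 ^ card S"
    using V(1) linear_code_finite[OF V(1)] by (simp add: sum.delta' linear_code_def)
  finally have "real (card A * card V) = real (2 ^ card S)"
    by simp
  then show ?thesis
    unfolding A_def by (simp only: of_nat_eq_iff)
qed

lemma dual_code_eq: "dual_code n C = {x\<in>vecs_on {..<n}. \<forall>y\<in>C. dot_zero n x y}"
  unfolding dual_code_def vecs_eq_vecs_on ..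

lemma card_dual_code_mult_card:
  "linear_code n C \<Longrightarrow> card (dual_code n C) * card C = 2 ^ n"
  using card_annihilator_mult_card[of "{..<n}" n C]
  unfolding dual_code_eq by (simp add: linear_code_def vecs_eq_vecs_on)

lemma linear_code_dual_code: "linear_code n (dual_code n C)"
proof -
  have "dot_zero n (vxor x y) c" if "dot_zero n x c" "dot_zero n y c" for x y c
    using that dot_zero_vxor[of n c x y] by (simp add: dot_zero_commute)
  moreover have "dot_zero n (\<lambda>_. False) c" for c
    using dot_zero_zero dot_zero_commute by blast
  moreover have "(\<lambda>_. False) \<in> vecs_on {..<n}"
    by (simp add: vecs_on_def)
  ultimately show ?thesis
    unfolding linear_code_def dual_code_eq vecs_eq_vecs_on
    by (intro conjI ballI subsetI) (simp_all add: vxor_vecs_on)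
qed

section \<open>Cosets of a linear code\<close>

locale binary_linear_code =
  fixes n :: nat and L :: "(nat \<Rightarrow> bool) set"
  assumes linear: "linear_code n L"
begin

lemma subset_vecs: "L \<subseteq> vecs n"
  and zero_mem: "(\<lambda>_. False) \<in> L"
  and vxor_mem: "x \<in> L \<Longrightarrow> y \<in> L \<Longrightarrow> vxor x y \<in> L"
  using linear unfolding linear_code_def by auto

lemma finite_code: "finite L"
  using linear_code_finite[OF linear] .

abbreviation coset_space :: "(nat \<Rightarrow> bool) set set" where
  "coset_space \<equiv> cosets (vecs n) L"

lemma mem_coset_iff: "y \<in> vxor x ` L \<longleftrightarrow> vxor x y \<in> L"
  by (metis image_iff vxor_cancel_left)

lemma coset_eqI: "vxor x1 x2 \<in> L \<Longrightarrow> vxor x1 ` L = vxor x2 ` L"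
proof -
  assume "vxor x1 x2 \<in> L"
  moreover have "vxor x2 y = vxor (vxor x1 x2) (vxor x1 y)"
    and "vxor x1 y = vxor (vxor x1 x2) (vxor x2 y)" for y
    by (auto simp: vxor_def)
  ultimately have "vxor x1 y \<in> L \<longleftrightarrow> vxor x2 y \<in> L" for y
    by (metis vxor_mem)
  then show ?thesis using mem_coset_iff by blast
qed

lemma cosets_disjoint: "w1 \<in> coset_space \<Longrightarrow> w2 \<in> coset_space \<Longrightarrow> z \<in> w1 \<Longrightarrow> z \<in> w2 \<Longrightarrow> w1 = w2"
proof -
  assume "w1 \<in> coset_space" "w2 \<in> coset_space" and z: "z \<in> w1" "z \<in> w2"
  then obtain x1 x2 where w: "w1 = vxor x1 ` L" "w2 = vxor x2 ` L"
    unfolding cosets_def by blast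
  have "vxor x1 x2 = vxor (vxor x1 z) (vxor x2 z)" by (auto simp: vxor_def)
  then have "vxor x1 x2 \<in> L" using z w mem_coset_iff vxor_mem by metis
  then show ?thesis using w coset_eqI by simp
qed

lemma Union_cosets: "\<Union>coset_space = vecs n"
proof
  show "\<Union>coset_space \<subseteq> vecs n"
    using subset_vecs unfolding cosets_def by (auto simp: vecs_def vxor_def)
  show "vecs n \<subseteq> \<Union>coset_space"
  proof
    fix x assume "x \<in> vecs n"
    then have "vxor x ` L \<in> coset_space" unfolding cosets_def by simp
    moreover have "x \<in> vxor x ` L" using zero_mem by (simp add: mem_coset_iff)
    ultimately show "x \<in> \<Union>coset_space" by blast
  qed
qed

lemma finite_cosets: "finite coset_space"
  unfolding cosets_def using finite_vecs by simp

lemma finite_coset: "w \<in> coset_space \<Longrightarrow> finite w"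
  by (rule finite_subset[of _ "vecs n"]) (use Union_cosets finite_vecs in auto)

lemma coset_nonempty: "w \<in> coset_space \<Longrightarrow> w \<noteq> {}"
  using zero_mem unfolding cosets_def by blast

lemma card_coset: "w \<in> coset_space \<Longrightarrow> card w = card L"
  unfolding cosets_def by (auto simp: card_image inj_on_vxor)

lemma card_cosets_mult_card: "card coset_space * card L = 2 ^ n"
proof -
  have "card L * card coset_space = card (\<Union>coset_space)"
  proof (rule card_partition)
    show "finite (\<Union>coset_space)" using Union_cosets finite_vecs by simp
    show "\<And>c1 c2. c1 \<in> coset_space \<Longrightarrow> c2 \<in> coset_space \<Longrightarrow> c1 \<noteq> c2 \<Longrightarrow> c1 \<inter> c2 = {}"
      using cosets_disjoint by blast
  qed (simp_all add: finite_cosets card_coset)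
  then show ?thesis using Union_cosets card_vecs by (simp add: mult.commute)
qed

lemma sum_cosets: "(\<Sum>w\<in>coset_space. \<Sum>x\<in>w. f x) = (\<Sum>x\<in>vecs n. f x)"
proof -
  have "(\<Sum>x\<in>\<Union>coset_space. f x) = (sum \<circ> sum) f coset_space"
    by (rule sum.Union_disjoint) (use finite_coset cosets_disjoint in auto)
  then show ?thesis using Union_cosets by simp
qed

lemma legit_error_vecs: "legit_error (vecs n) L = 0"
proof -
  have "legit_decode (vecs n) L x = w" if "w \<in> coset_space" "x \<in> w" for w x
  proof -
    have "legit_decode (vecs n) L x \<in> coset_space \<and> x \<in> legit_decode (vecs n) L x"
      unfolding legit_decode_def by (rule someI[of _ w]) (use that in simp)
    then show ?thesis using cosets_disjoint that by blast
  qed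
  then show ?thesis unfolding legit_error_def by simp
qed

lemma card_coset_agreeing_le:
  assumes "w \<in> coset_space"
  shows "card {x\<in>w. \<forall>i\<in>U. x i = b i} \<le> card {d\<in>L. \<forall>i\<in>U. \<not> d i}"
proof (cases "{x\<in>w. \<forall>i\<in>U. x i = b i} = {}")
  case True
  then show ?thesis by (simp only: card.empty zero_le)
next
  case False
  then obtain x1 where x1: "x1 \<in> w" "\<forall>i\<in>U. x1 i = b i" by blast
  obtain x0 where w: "w = vxor x0 ` L" using assms unfolding cosets_def by blast
  have "vxor x x1 \<in> {d\<in>L. \<forall>i\<in>U. \<not> d i}" if x: "x \<in> w" "\<forall>i\<in>U. x i = b i" for x
  proof -
    have "vxor x0 x \<in> L" "vxor x0 x1 \<in> L"
      using w x x1 mem_coset_iff by auto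
    moreover have "vxor x x1 = vxor (vxor x0 x) (vxor x0 x1)" by (auto simp: vxor_def)
    ultimately have "vxor x x1 \<in> L" using vxor_mem by simp
    then show ?thesis using x x1 by (auto simp: vxor_def)
  qed
  then have "(\<lambda>x. vxor x x1) ` {x\<in>w. \<forall>i\<in>U. x i = b i} \<subseteq> {d\<in>L. \<forall>i\<in>U. \<not> d i}"
    by blast
  then show ?thesis
    using finite_code by (intro card_inj_on_le[OF inj_on_vxor_right]) auto
qed

lemma sum_card_cosets_agreeing:
  assumes U: "U \<subseteq> {..<n}"
  shows "(\<Sum>w\<in>coset_space. card {x\<in>w. \<forall>i\<in>U. x i = b i}) = 2 ^ (n - card U)"
proof -
  define S where "S = {..<n} - U"
  define bU where "bU = (\<lambda>i. i \<in> U \<and> b i)"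
  have "bij_betw (\<lambda>y. vxor y bU) (vecs_on S) {x\<in>vecs n. \<forall>i\<in>U. x i = b i}"
    by (rule bij_betwI[where g="\<lambda>y. vxor y bU"])
      (use U in \<open>auto simp: S_def bU_def vecs_on_def vecs_def vxor_def\<close>)
  then have "card {x\<in>vecs n. \<forall>i\<in>U. x i = b i} = 2 ^ card S"
    using card_vecs_on[of S] by (simp add: bij_betw_same_card S_def)
  moreover have "card S = n - card U"
    using U by (simp add: S_def card_Diff_subset finite_subset)
  moreover have "(\<Sum>w\<in>coset_space. card {x\<in>w. \<forall>i\<in>U. x i = b i}) = card {x\<in>vecs n. \<forall>i\<in>U. x i = b i}"
    using sum_cosets[of "\<lambda>x. if \<forall>i\<in>U. x i = b i then 1 else 0 :: nat"] finite_coset finite_vecs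
    by (simp add: sum.inter_filter[symmetric])
  ultimately show ?thesis by simp
qed

end

section \<open>Subcodes supported on a set of positions\<close>

definition supported_on :: "(nat \<Rightarrow> bool) set \<Rightarrow> nat set \<Rightarrow> (nat \<Rightarrow> bool) set" where
  "supported_on C U = {c\<in>C. \<forall>i. i \<notin> U \<longrightarrow> \<not> c i}"

lemma linear_code_supported_on: "linear_code n C \<Longrightarrow> linear_code n (supported_on C U)"
  unfolding linear_code_def supported_on_def by (auto simp: vxor_def)

lemma card_supported_on_pos: "linear_code n C \<Longrightarrow> card (supported_on C U) > 0"
  using linear_code_card_pos linear_code_supported_on by blast

lemma card_supported_on_le: "linear_code n C \<Longrightarrow> card (supported_on C U) \<le> card C"
  unfolding supported_on_def using linear_code_finite by (intro card_mono) auto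

lemma supported_on_empty: "linear_code n C \<Longrightarrow> supported_on C {} = {\<lambda>_. False}"
  unfolding supported_on_def linear_code_def by auto

lemma card_linear_code_image_kernel:
  assumes C: "linear_code n C"
    and hom: "\<And>x y. x \<in> C \<Longrightarrow> y \<in> C \<Longrightarrow> p (vxor x y) = vxor (p x) (p y)"
  shows "card C = card (p ` C) * card {c\<in>C. p c = (\<lambda>_. False)}"
proof -
  let ?K = "{c\<in>C. p c = (\<lambda>_. False)}"
  have closed: "vxor x y \<in> C" if "x \<in> C" "y \<in> C" for x y
    using C that unfolding linear_code_def by blast
  have fibre: "{c\<in>C. p c = p c0} = vxor c0 ` ?K" if c0: "c0 \<in> C" for c0
  proof
    show "{c\<in>C. p c = p c0} \<subseteq> vxor c0 ` ?K"
    proof clarify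
      fix c assume c: "c \<in> C" "p c = p c0"
      then have "vxor c0 c \<in> ?K"
        using hom[OF c0 c(1)] closed[OF c0 c(1)] by (simp add: vxor_def)
      then show "c \<in> vxor c0 ` ?K"
        using vxor_cancel_left[of c0 c] by (metis image_eqI)
    qed
    show "vxor c0 ` ?K \<subseteq> {c\<in>C. p c = p c0}"
      using hom[OF c0] closed[OF c0] by (auto simp: vxor_def)
  qed
  have "card C = card (\<Union>v\<in>p ` C. {c\<in>C. p c = v})"
    by (rule arg_cong[where f=card]) auto
  also have "\<dots> = (\<Sum>v\<in>p ` C. card {c\<in>C. p c = v})"
    using linear_code_finite[OF C] by (intro card_UN_disjoint) auto
  also have "\<dots> = (\<Sum>v\<in>p ` C. card ?K)"
    by (intro sum.cong) (auto simp: fibre card_image inj_on_vxor)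
  finally show ?thesis by simp
qed

lemma linear_code_image:
  assumes C: "linear_code n C"
    and hom: "\<And>x y. x \<in> C \<Longrightarrow> y \<in> C \<Longrightarrow> p (vxor x y) = vxor (p x) (p y)"
    and "p ` C \<subseteq> vecs n"
  shows "linear_code n (p ` C)"
proof -
  have zero: "(\<lambda>_. False) \<in> C" and closed: "\<And>x y. x \<in> C \<Longrightarrow> y \<in> C \<Longrightarrow> vxor x y \<in> C"
    using C unfolding linear_code_def by auto
  have "p (\<lambda>_. False) = (\<lambda>_. False)"
    using hom[OF zero zero] by simp
  then have "(\<lambda>_. False) \<in> p ` C"
    using zero by (metis image_eqI)
  moreover have "vxor v v' \<in> p ` C" if v: "v \<in> p ` C" "v' \<in> p ` C" for v v'
  proof -
    obtain c c' where "c \<in> C" "c' \<in> C" "v = p c" "v' = p c'" using v by blast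
    then have "vxor v v' = p (vxor c c') \<and> vxor c c' \<in> C" by (simp add: hom closed)
    then show ?thesis by blast
  qed
  ultimately show ?thesis
    using assms(3) unfolding linear_code_def by blast
qed

lemma card_supported_on_insert_le:
  assumes C: "linear_code n C"
  shows "card (supported_on C (insert a U)) \<le> 2 * card (supported_on C U)"
proof -
  let ?C' = "supported_on C (insert a U)" and ?p = "\<lambda>c i. i = a \<and> c i"
  have "card ?C' = card (?p ` ?C') * card {c\<in>?C'. ?p c = (\<lambda>_. False)}"
    using linear_code_supported_on[OF C]
    by (rule card_linear_code_image_kernel) (auto simp: vxor_def)
  moreover have "card (?p ` ?C') \<le> 2"
  proof -
    have "?p ` ?C' \<subseteq> {\<lambda>_. False, \<lambda>i. i = a}"
      by (auto simp: fun_eq_iff)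
    then have "card (?p ` ?C') \<le> card {\<lambda>_. False, \<lambda>i. i = a}"
      by (intro card_mono) simp_all
    also have "\<dots> \<le> 2"
      by (simp add: card_insert_if)
    finally show ?thesis .
  qed
  moreover have "card {c\<in>?C'. ?p c = (\<lambda>_. False)} \<le> card (supported_on C U)"
    using linear_code_finite[OF linear_code_supported_on[OF C]]
    by (intro card_mono) (force simp: supported_on_def fun_eq_iff)+
  ultimately show ?thesis
    by (simp add: mult_le_mono)
qed

lemma consistent_codewords_eq:
  assumes C: "linear_code n C" and x: "x \<in> C"
  shows "{c\<in>C. \<forall>i<n. i \<notin> E \<longrightarrow> c i = x i} = vxor x ` supported_on C E"
proof
  have closed: "vxor c c' \<in> C" if "c \<in> C" "c' \<in> C" for c c'
    using C that unfolding linear_code_def by blast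
  have outside: "\<not> c i" if "c \<in> C" "\<not> i < n" for c i
    using C that unfolding linear_code_def vecs_def by auto
  show "{c\<in>C. \<forall>i<n. i \<notin> E \<longrightarrow> c i = x i} \<subseteq> vxor x ` supported_on C E"
  proof clarify
    fix c assume c: "c \<in> C" "\<forall>i<n. i \<notin> E \<longrightarrow> c i = x i"
    have "x i = c i" if "i \<notin> E" for i
      using c(2) that outside[OF c(1), of i] outside[OF x, of i] by (cases "i < n") auto
    then have "vxor x c \<in> supported_on C E"
      using closed[OF x c(1)] by (simp add: supported_on_def vxor_def)
    then show "c \<in> vxor x ` supported_on C E"
      using vxor_cancel_left[of x c] by (metis image_eqI)
  qed
  show "vxor x ` supported_on C E \<subseteq> {c\<in>C. \<forall>i<n. i \<notin> E \<longrightarrow> c i = x i}"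
    using closed[OF x] unfolding supported_on_def by (auto simp: vxor_def)
qed

lemma card_dual_code_vanishing:
  assumes C: "linear_code n C" and U: "U \<subseteq> {..<n}"
  shows "card {d\<in>dual_code n C. \<forall>i\<in>U. \<not> d i} * card C = 2 ^ (n - card U) * card (supported_on C U)"
proof -
  define S where "S = {..<n} - U"
  define p where "p = (\<lambda>c i. c i \<and> i \<in> S)"
  have hom: "p (vxor x y) = vxor (p x) (p y)" for x y
    unfolding p_def vxor_def by auto
  have "p ` C \<subseteq> vecs n" by (auto simp: p_def S_def vecs_def)
  then have "linear_code n (p ` C)"
    using C hom by (intro linear_code_image)
  moreover have "p ` C \<subseteq> vecs_on S" by (auto simp: p_def vecs_on_def)
  ultimately have annihilator:
    "card {x\<in>vecs_on S. \<forall>y\<in>p ` C. dot_zero n x y} * card (p ` C) = 2 ^ card S"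
    by (intro card_annihilator_mult_card) (auto simp: S_def)
  have annihilator_eq: "{x\<in>vecs_on S. \<forall>y\<in>p ` C. dot_zero n x y} = {d\<in>dual_code n C. \<forall>i\<in>U. \<not> d i}"
  proof -
    have "dot_zero n x (p c) \<longleftrightarrow> dot_zero n x c" if "x \<in> vecs_on S" for x c
    proof -
      have "{i\<in>{..<n}. x i \<and> p c i} = {i\<in>{..<n}. x i \<and> c i}"
        using that unfolding p_def vecs_on_def by auto
      then show ?thesis unfolding dot_zero_def by simp
    qed
    moreover have "x \<in> vecs_on S \<longleftrightarrow> x \<in> vecs_on {..<n} \<and> (\<forall>i\<in>U. \<not> x i)" for x
      using U unfolding vecs_on_def S_def by auto
    ultimately show ?thesis unfolding dual_code_eq by auto
  qed
  have kernel: "card C = card (p ` C) * card {c\<in>C. p c = (\<lambda>_. False)}"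
    by (rule card_linear_code_image_kernel[OF C]) (rule hom)
  have kernel_eq: "{c\<in>C. p c = (\<lambda>_. False)} = supported_on C U"
  proof -
    have "\<not> c i" if "c \<in> C" "\<not> i < n" for c i
      using C that unfolding linear_code_def vecs_def by auto
    then show ?thesis
      unfolding supported_on_def p_def S_def by (auto simp: fun_eq_iff)
  qed
  have "card S = n - card U"
    using U by (simp add: S_def card_Diff_subset finite_subset)
  then show ?thesis
    using annihilator unfolding kernel kernel_eq annihilator_eq by (simp only: mult.assoc[symmetric])
qed

section \<open>Expansion of word likelihoods and Gibbs' inequality\<close>

lemma sum_vecs_prod:
  fixes G :: "nat \<Rightarrow> bool \<Rightarrow> real"
  shows "(\<Sum>x\<in>vecs n. \<Prod>i<n. G i (x i)) = (\<Prod>i<n. G i False + G i True)"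
proof -
  have bij: "bij_betw (\<lambda>X i. i \<in> X) (Pow {..<n}) (vecs n)"
    unfolding vecs_eq_vecs_on by (rule bij_betwI[where g="\<lambda>x. {i. x i}"]) (auto simp: vecs_on_def)
  have "(\<Prod>i<n. G i True + G i False) = (\<Sum>X\<in>Pow {..<n}. (\<Prod>i\<in>X. G i True) * (\<Prod>i\<in>{..<n}-X. G i False))"
    by (rule prod_add) simp
  also have "\<dots> = (\<Sum>X\<in>Pow {..<n}. \<Prod>i<n. G i (i \<in> X))"
    by (intro sum.cong refl) (simp add: prod.subset_diff[of _ "{..<n}"] mult.commute)
  also have "\<dots> = (\<Sum>x\<in>vecs n. \<Prod>i<n. G i (x i))"
    using sum.reindex_bij_betw[OF bij, of "\<lambda>x. \<Prod>i<n. G i (x i)"] by simp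
  finally show ?thesis by (simp add: add.commute)
qed

definition lik_min :: "(nat \<Rightarrow> bool \<Rightarrow> real) \<Rightarrow> nat \<Rightarrow> real" where
  "lik_min G i = min (G i False) (G i True)"

definition lik_gap :: "(nat \<Rightarrow> bool \<Rightarrow> real) \<Rightarrow> nat \<Rightarrow> real" where
  "lik_gap G i = \<bar>G i False - G i True\<bar>"

definition ml_bit :: "(nat \<Rightarrow> bool \<Rightarrow> real) \<Rightarrow> nat \<Rightarrow> bool" where
  "ml_bit G i \<longleftrightarrow> G i True > G i False"

text \<open>Splitting every likelihood as lik_min plus lik_gap on the more likely bit presents the
  channel as a mixture of an erasure channel and a noiseless one; expanding the product over
  the positions writes the likelihood of a word as a sum over the sets U of positions seen
  through the noiseless part.\<close>

lemma prod_lik_expand: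
  "(\<Prod>i<n. G i (x i)) = (\<Sum>U\<in>Pow {..<n}.
     (if \<forall>i\<in>U. x i = ml_bit G i then \<Prod>i\<in>U. lik_gap G i else 0) * (\<Prod>i\<in>{..<n}-U. lik_min G i))"
proof -
  have split: "G i b = (if b = ml_bit G i then lik_gap G i else 0) + lik_min G i" for i b
    unfolding lik_min_def lik_gap_def ml_bit_def by (cases b) auto
  have prod_if: "(\<Prod>i\<in>U. if x i = ml_bit G i then lik_gap G i else 0)
      = (if \<forall>i\<in>U. x i = ml_bit G i then \<Prod>i\<in>U. lik_gap G i else 0)" if "finite U" for U
    using that by (auto simp: prod_zero_iff)
  have "(\<Prod>i<n. G i (x i)) = (\<Prod>i<n. (if x i = ml_bit G i then lik_gap G i else 0) + lik_min G i)"
    by (subst split) simp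
  also have "\<dots> = (\<Sum>U\<in>Pow {..<n}.
      (\<Prod>i\<in>U. if x i = ml_bit G i then lik_gap G i else 0) * (\<Prod>i\<in>{..<n}-U. lik_min G i))"
    by (rule prod_add) simp
  also have "\<dots> = (\<Sum>U\<in>Pow {..<n}.
     (if \<forall>i\<in>U. x i = ml_bit G i then \<Prod>i\<in>U. lik_gap G i else 0) * (\<Prod>i\<in>{..<n}-U. lik_min G i))"
  proof (intro sum.cong refl)
    fix U assume "U \<in> Pow {..<n}"
    then have "finite U" by (auto intro: finite_subset)
    then show "(\<Prod>i\<in>U. if x i = ml_bit G i then lik_gap G i else 0) * (\<Prod>i\<in>{..<n}-U. lik_min G i)
      = (if \<forall>i\<in>U. x i = ml_bit G i then \<Prod>i\<in>U. lik_gap G i else 0) * (\<Prod>i\<in>{..<n}-U. lik_min G i)"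
      by (simp only: prod_if)
  qed
  finally show ?thesis .
qed

lemma gibbs_inequality:
  fixes q p :: "'a \<Rightarrow> real"
  assumes "finite W" and q: "\<forall>w\<in>W. q w \<ge> 0" and p: "\<forall>w\<in>W. p w \<ge> 0"
    and "sum q W = 1" "sum p W \<le> 1" and pos: "\<forall>w\<in>W. q w > 0 \<longrightarrow> p w > 0"
  shows "(\<Sum>w\<in>W. q w * (- log 2 (q w))) \<le> (\<Sum>w\<in>W. q w * (- log 2 (p w)))"
proof -
  have "q w * (log 2 (p w) - log 2 (q w)) \<le> (p w - q w) / ln 2" if "w \<in> W" for w
  proof (cases "q w > 0")
    case True
    with pos that have "p w > 0" by auto
    have "ln (p w / q w) \<le> p w / q w - 1"
      using True \<open>p w > 0\<close> by (intro ln_le_minus_one) simp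
    then have "q w * ln (p w / q w) \<le> p w - q w"
      using True mult_left_mono[of _ _ "q w"] by (fastforce simp: field_simps)
    moreover have "q w * (log 2 (p w) - log 2 (q w)) = q w * ln (p w / q w) / ln 2"
      using True \<open>p w > 0\<close> by (simp add: log_def ln_div diff_divide_distrib[symmetric])
    ultimately show ?thesis
      by (simp add: divide_right_mono)
  next
    case False
    then show ?thesis using q p that by force
  qed
  then have "(\<Sum>w\<in>W. q w * (log 2 (p w) - log 2 (q w))) \<le> (\<Sum>w\<in>W. (p w - q w) / ln 2)"
    by (rule sum_mono)
  also have "\<dots> = (sum p W - sum q W) / ln 2"
    by (simp add: sum_divide_distrib[symmetric] sum_subtractf)
  also have "\<dots> \<le> 0" using assms by (simp add: divide_nonpos_pos)
  finally show ?thesis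
    by (simp add: sum_subtractf right_diff_distrib sum_negf)
qed

lemma entropy_ge_of_le:
  fixes q :: "'a \<Rightarrow> real"
  assumes "\<forall>w\<in>W. q w \<ge> 0" "sum q W = 1" "c > 0" "\<forall>w\<in>W. q w \<le> c"
  shows "- log 2 c \<le> (\<Sum>w\<in>W. q w * (- log 2 (q w)))"
proof -
  have "q w * (- log 2 c) \<le> q w * (- log 2 (q w))" if "w \<in> W" for w
    using assms that by (cases "q w > 0") (auto intro: mult_left_mono)
  then have "(\<Sum>w\<in>W. q w * (- log 2 c)) \<le> (\<Sum>w\<in>W. q w * (- log 2 (q w)))"
    by (rule sum_mono)
  then show ?thesis
    by (simp only: sum_distrib_right[symmetric] assms(2) mult_1)
qed

section \<open>Averages over random subsets\<close>

definition bernoulli_avg :: "nat set \<Rightarrow> (nat set \<Rightarrow> real) \<Rightarrow> real \<Rightarrow> real" where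
  "bernoulli_avg S L d = (\<Sum>E\<in>Pow S. d ^ card E * (1 - d) ^ (card S - card E) * L E)"

lemma bernoulli_avg_insert:
  assumes "finite S" "a \<notin> S"
  shows "bernoulli_avg (insert a S) L d = (1 - d) * bernoulli_avg S L d + d * bernoulli_avg S (\<lambda>E. L (insert a E)) d"
proof -
  have card_le: "card E \<le> card S" if "E \<in> Pow S" for E
    using that assms by (auto intro: card_mono)
  have card_insert: "card (insert a E) = Suc (card E)" if "E \<in> Pow S" for E
    using that assms by (subst card_insert_disjoint) (auto intro: finite_subset)
  have "inj_on (insert a) (Pow S)"
    using assms(2) by (intro inj_on_inverseI[where g="\<lambda>E. E - {a}"]) auto
  moreover have "Pow S \<inter> insert a ` Pow S = {}" using assms(2) by auto
  ultimately have "bernoulli_avg (insert a S) L d =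
      (\<Sum>E\<in>Pow S. d ^ card E * (1 - d) ^ (Suc (card S) - card E) * L E) +
      (\<Sum>E\<in>Pow S. d ^ card (insert a E) * (1 - d) ^ (Suc (card S) - card (insert a E)) * L (insert a E))"
    using assms unfolding bernoulli_avg_def Pow_insert
    by (simp add: sum.union_disjoint sum.reindex)
  also have "\<dots> = (1 - d) * bernoulli_avg S L d + d * bernoulli_avg S (\<lambda>E. L (insert a E)) d"
    unfolding bernoulli_avg_def sum_distrib_left
    using card_le card_insert by (intro arg_cong2[where f="(+)"] sum.cong refl) (simp_all add: Suc_diff_le)
  finally show ?thesis .
qed

lemma bernoulli_avg_const:
  "finite S \<Longrightarrow> bernoulli_avg S (\<lambda>_. c) d = c"
proof (induction S rule: finite_induct)
  case empty
  show ?case by (simp add: bernoulli_avg_def)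
next
  case (insert a S)
  then show ?case by (simp add: bernoulli_avg_insert algebra_simps)
qed

lemma bernoulli_avg_diff:
  "bernoulli_avg S (\<lambda>E. L1 E - L2 E) d = bernoulli_avg S L1 d - bernoulli_avg S L2 d"
  unfolding bernoulli_avg_def by (simp add: sum_subtractf[symmetric] right_diff_distrib)

lemma bernoulli_avg_mono:
  assumes "0 \<le> d" "d \<le> 1" "\<And>E. E \<subseteq> S \<Longrightarrow> L1 E \<le> L2 E"
  shows "bernoulli_avg S L1 d \<le> bernoulli_avg S L2 d"
  unfolding bernoulli_avg_def using assms by (intro sum_mono mult_left_mono) auto

lemma bernoulli_avg_zero: "finite S \<Longrightarrow> bernoulli_avg S L 0 = L {}"
  unfolding bernoulli_avg_def
  by (subst sum.mono_neutral_cong_right[of "Pow S" "{{}}"]) (auto simp: finite_subset)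

definition unit_increments :: "nat set \<Rightarrow> (nat set \<Rightarrow> real) \<Rightarrow> bool" where
  "unit_increments S L \<longleftrightarrow>
     (\<forall>E a. E \<subseteq> S \<longrightarrow> a \<in> S \<longrightarrow> a \<notin> E \<longrightarrow> L E \<le> L (insert a E) \<and> L (insert a E) \<le> L E + 1)"

lemma unit_increments_insertD:
  assumes incr: "unit_increments (insert a S) L" and a: "a \<notin> S"
  shows "unit_increments S L" "unit_increments S (\<lambda>E. L (insert a E))"
    and "\<And>E. E \<subseteq> S \<Longrightarrow> 0 \<le> L (insert a E) - L E \<and> L (insert a E) - L E \<le> 1"
proof -
  have step: "L E \<le> L (insert b E) \<and> L (insert b E) \<le> L E + 1"
    if "E \<subseteq> insert a S" "b \<in> insert a S" "b \<notin> E" for E b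
    using incr that unfolding unit_increments_def by blast
  show "unit_increments S L"
    unfolding unit_increments_def by (intro allI impI step) auto
  show "unit_increments S (\<lambda>E. L (insert a E))"
    unfolding unit_increments_def
  proof (intro allI impI)
    fix E b assume "E \<subseteq> S" "b \<in> S" "b \<notin> E"
    then have "L (insert a E) \<le> L (insert b (insert a E)) \<and> L (insert b (insert a E)) \<le> L (insert a E) + 1"
      using a by (intro step) auto
    then show "L (insert a E) \<le> L (insert a (insert b E)) \<and> L (insert a (insert b E)) \<le> L (insert a E) + 1"
      by (simp add: insert_commute)
  qed
  fix E assume "E \<subseteq> S"
  then have "L E \<le> L (insert a E) \<and> L (insert a E) \<le> L E + 1"
    using a by (intro step) auto
  then show "0 \<le> L (insert a E) - L E \<and> L (insert a E) - L E \<le> 1"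
    by linarith
qed

lemma bernoulli_avg_increments:
  assumes "finite S" "unit_increments S L" "0 \<le> d" "d \<le> d'" "d' \<le> 1"
  shows "bernoulli_avg S L d \<le> bernoulli_avg S L d' \<and>
    bernoulli_avg S L d' \<le> bernoulli_avg S L d + real (card S) * (d' - d)"
  using assms(1,2)
proof (induction S arbitrary: L rule: finite_induct)
  case empty
  show ?case by (simp add: bernoulli_avg_def)
next
  case (insert a S)
  let ?L' = "\<lambda>E. L (insert a E)"
  define A where "A x = bernoulli_avg S L x" for x
  define B where "B x = bernoulli_avg S ?L' x" for x
  note incr = unit_increments_insertD[OF insert.prems insert.hyps(2)]
  have IA: "A d \<le> A d'" "A d' \<le> A d + real (card S) * (d' - d)"
    using insert.IH[OF incr(1)] unfolding A_def by auto
  have IB: "B d \<le> B d'" "B d' \<le> B d + real (card S) * (d' - d)"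
    using insert.IH[OF incr(2)] unfolding B_def by auto
  have "bernoulli_avg S (\<lambda>E. ?L' E - L E) d' \<le> bernoulli_avg S (\<lambda>_. 1) d'"
    and "bernoulli_avg S (\<lambda>_. 0) d' \<le> bernoulli_avg S (\<lambda>E. ?L' E - L E) d'"
    using incr(3) assms by (auto intro!: bernoulli_avg_mono)
  then have BA: "0 \<le> B d' - A d'" "B d' - A d' \<le> 1"
    unfolding A_def B_def bernoulli_avg_diff bernoulli_avg_const[OF insert.hyps(1)] by auto
  have "bernoulli_avg (insert a S) L d' - bernoulli_avg (insert a S) L d
      = (1 - d) * (A d' - A d) + d * (B d' - B d) + (d' - d) * (B d' - A d')"
    unfolding bernoulli_avg_insert[OF insert.hyps] A_def B_def by (simp add: algebra_simps)
  moreover have "0 \<le> (1 - d) * (A d' - A d)" "(1 - d) * (A d' - A d) \<le> (1 - d) * (real (card S) * (d' - d))"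
    and "0 \<le> d * (B d' - B d)" "d * (B d' - B d) \<le> d * (real (card S) * (d' - d))"
    and "0 \<le> (d' - d) * (B d' - A d')" "(d' - d) * (B d' - A d') \<le> d' - d"
    using IA IB BA assms by (auto intro: mult_left_mono mult_left_le)
  moreover have "real (card (insert a S)) * (d' - d) = real (card S) * (d' - d) + (d' - d)"
    using insert.hyps by (simp add: algebra_simps)
  moreover have "(1 - d) * (real (card S) * (d' - d)) + d * (real (card S) * (d' - d))
      = real (card S) * (d' - d)"
    by (simp add: algebra_simps)
  ultimately show ?case
    by linarith
qed

section \<open>The eavesdropper's AWGN channel\<close>

lemma g_awgn_normal_density:
  "g_awgn lam True = normal_density (sqrt (2 * lam)) 1"
  "g_awgn lam False = normal_density (- sqrt (2 * lam)) 1"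
  unfolding g_awgn_def normal_density_def by (auto simp: fun_eq_iff)

lemma g_awgn_std_normal_density:
  "g_awgn lam True t = std_normal_density (t - sqrt (2 * lam))"
  "g_awgn lam False t = std_normal_density (t + sqrt (2 * lam))"
  unfolding g_awgn_def normal_density_def by simp_all

lemma Qfun_eq: "Qfun x = (\<integral>z. std_normal_density z * indicator {x..} z \<partial>lborel)"
  unfolding Qfun_def normal_density_def by (simp add: mult.commute)

lemma g_awgn_pos: "g_awgn lam b t > 0"
  unfolding g_awgn_def by simp

lemma borel_measurable_g_awgn [measurable]: "g_awgn lam b \<in> borel_measurable borel"
  by (cases b) (simp_all add: g_awgn_normal_density)

lemma integrable_g_awgn: "integrable lborel (g_awgn lam b)"
  by (cases b) (simp_all add: g_awgn_normal_density)

lemma integral_g_awgn: "(\<integral>t. g_awgn lam b t \<partial>lborel) = 1"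
  by (cases b) (simp_all add: g_awgn_normal_density)

definition awgn_lik :: "real \<Rightarrow> (nat \<Rightarrow> real) \<Rightarrow> nat \<Rightarrow> bool \<Rightarrow> real" where
  "awgn_lik lam z i b = g_awgn lam b (z i)"

definition awgn_min :: "real \<Rightarrow> real \<Rightarrow> real" where
  "awgn_min lam t = min (g_awgn lam False t) (g_awgn lam True t)"

definition awgn_gap :: "real \<Rightarrow> real \<Rightarrow> real" where
  "awgn_gap lam t = \<bar>g_awgn lam False t - g_awgn lam True t\<bar>"

lemma lik_min_awgn_lik: "lik_min (awgn_lik lam z) i = awgn_min lam (z i)"
  unfolding lik_min_def awgn_min_def awgn_lik_def ..

lemma lik_gap_awgn_lik: "lik_gap (awgn_lik lam z) i = awgn_gap lam (z i)"
  unfolding lik_gap_def awgn_gap_def awgn_lik_def ..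

lemma awgn_min_nonneg: "awgn_min lam t \<ge> 0"
  using g_awgn_pos[of lam False t] g_awgn_pos[of lam True t] by (simp add: awgn_min_def)

lemma borel_measurable_awgn_min [measurable]: "awgn_min lam \<in> borel_measurable borel"
  unfolding awgn_min_def[abs_def] by measurable

lemma borel_measurable_awgn_gap [measurable]: "awgn_gap lam \<in> borel_measurable borel"
  unfolding awgn_gap_def[abs_def] by measurable

lemma integrable_awgn_min: "integrable lborel (awgn_min lam)"
proof (rule Bochner_Integration.integrable_bound[OF integrable_g_awgn[of lam False]])
  show "AE t in lborel. norm (awgn_min lam t) \<le> norm (g_awgn lam False t)"
  proof (rule AE_I2)
    fix t
    have "0 < g_awgn lam False t" "0 < g_awgn lam True t" by (rule g_awgn_pos)+
    then show "norm (awgn_min lam t) \<le> norm (g_awgn lam False t)"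
      unfolding awgn_min_def by simp
  qed
qed simp

lemma integrable_awgn_gap: "integrable lborel (awgn_gap lam)"
proof (rule Bochner_Integration.integrable_bound)
  show "integrable lborel (\<lambda>t. g_awgn lam False t + g_awgn lam True t)"
    by (intro Bochner_Integration.integrable_add integrable_g_awgn)
  show "AE t in lborel. norm (awgn_gap lam t) \<le> norm (g_awgn lam False t + g_awgn lam True t)"
  proof (rule AE_I2)
    fix t
    have "0 < g_awgn lam False t" "0 < g_awgn lam True t" by (rule g_awgn_pos)+
    then show "norm (awgn_gap lam t) \<le> norm (g_awgn lam False t + g_awgn lam True t)"
      unfolding awgn_gap_def by simp
  qed
qed simp

lemma integral_awgn_gap_min: "(\<integral>t. awgn_gap lam t / 2 \<partial>lborel) + (\<integral>t. awgn_min lam t \<partial>lborel) = 1"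
proof -
  have "(\<integral>t. awgn_gap lam t / 2 \<partial>lborel) + (\<integral>t. awgn_min lam t \<partial>lborel)
      = (\<integral>t. awgn_gap lam t / 2 + awgn_min lam t \<partial>lborel)"
    using integrable_awgn_gap integrable_awgn_min by simp
  also have "\<dots> = (\<integral>t. (g_awgn lam False t + g_awgn lam True t) / 2 \<partial>lborel)"
    by (rule Bochner_Integration.integral_cong) (auto simp: awgn_gap_def awgn_min_def)
  also have "\<dots> = 1"
    using integrable_g_awgn by (simp add: integral_g_awgn)
  finally show ?thesis .
qed

text \<open>For t \<ge> 0 the density centred at -sqrt(2 lam) is the smaller one, for t < 0 the other:
  each of the two resulting half-line integrals is a Gaussian tail Q(sqrt(2 lam)).\<close>

lemma awgn_min_split:
  assumes "lam \<ge> 0"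
  shows "awgn_min lam t = g_awgn lam False t * indicator {0..} t + g_awgn lam True t * indicator {..<0} t"
proof -
  define s where "s = sqrt (2 * lam)"
  have "s \<ge> 0" unfolding s_def using assms by simp
  have e: "g_awgn lam False t = exp (- (t + s)\<^sup>2 / 2) / sqrt (2 * pi)"
    "g_awgn lam True t = exp (- (t - s)\<^sup>2 / 2) / sqrt (2 * pi)"
    unfolding g_awgn_def s_def by simp_all
  show ?thesis
  proof (cases "t \<ge> 0")
    case True
    then have "(t - s)\<^sup>2 \<le> (t + s)\<^sup>2" using \<open>s \<ge> 0\<close> by (simp add: power2_eq_square algebra_simps)
    then have "g_awgn lam False t \<le> g_awgn lam True t"
      unfolding e by (intro divide_right_mono) auto
    then show ?thesis using True unfolding awgn_min_def by (simp add: indicator_def)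
  next
    case False
    then have "(t + s)\<^sup>2 \<le> (t - s)\<^sup>2"
      using \<open>s \<ge> 0\<close> mult_nonneg_nonpos[of s t] by (simp add: power2_eq_square algebra_simps)
    then have "g_awgn lam True t \<le> g_awgn lam False t"
      unfolding e by (intro divide_right_mono) auto
    then show ?thesis using False unfolding awgn_min_def by (simp add: indicator_def)
  qed
qed

lemma integral_awgn_min:
  assumes "lam \<ge> 0"
  shows "(\<integral>t. awgn_min lam t \<partial>lborel) = 2 * Qfun (sqrt (2 * lam))"
proof -
  define s where "s = sqrt (2 * lam)"
  define f where "f u = std_normal_density u * indicator {s..} u" for u
  have "Qfun s = (\<integral>x. f (s + 1 * x) \<partial>lborel)"
    using lborel_integral_real_affine[of 1 f s] unfolding Qfun_eq f_def by simp
  also have "\<dots> = (\<integral>t. g_awgn lam False t * indicator {0..} t \<partial>lborel)"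
    by (intro Bochner_Integration.integral_cong refl)
      (simp add: f_def g_awgn_std_normal_density s_def add.commute indicator_def)
  finally have right: "(\<integral>t. g_awgn lam False t * indicator {0..} t \<partial>lborel) = Qfun s" ..
  have "Qfun s = (\<integral>x. f (s + (-1) * x) \<partial>lborel)"
    using lborel_integral_real_affine[of "-1" f s] unfolding Qfun_eq f_def by simp
  also have "\<dots> = (\<integral>t. g_awgn lam True t * indicator {..0} t \<partial>lborel)"
  proof (intro Bochner_Integration.integral_cong refl)
    fix x
    have "std_normal_density (s - x) = std_normal_density (x - s)"
      unfolding normal_density_def by (simp add: power2_commute)
    then show "f (s + (-1) * x) = g_awgn lam True x * indicator {..0} x"
      by (auto simp: f_def g_awgn_std_normal_density s_def indicator_def)
  qed
  also have "\<dots> = (\<integral>t. g_awgn lam True t * indicator {..<0} t \<partial>lborel)"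
    using AE_lborel_singleton[of 0]
    by (intro integral_cong_AE) (auto elim!: eventually_mono simp: indicator_def)
  finally have left: "(\<integral>t. g_awgn lam True t * indicator {..<0} t \<partial>lborel) = Qfun s" ..
  have "(\<integral>t. awgn_min lam t \<partial>lborel) =
      (\<integral>t. g_awgn lam False t * indicator {0..} t + g_awgn lam True t * indicator {..<0} t \<partial>lborel)"
    using awgn_min_split[OF assms] by simp
  also have "\<dots> = Qfun s + Qfun s"
  proof -
    have "integrable lborel (\<lambda>t. g_awgn lam b t * indicator A t)" if "A \<in> sets borel" for b A
      using that by (intro integrable_real_mult_indicator) (simp_all add: integrable_g_awgn)
    then show ?thesis using left right by simp
  qed
  finally show ?thesis unfolding s_def by simp
qed

interpretation lborel_product: product_sigma_finite "\<lambda>_::nat. lborel :: real measure"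
  by standard

lemma product_integral_split:
  fixes F1 F2 :: "real \<Rightarrow> real"
  assumes U: "U \<subseteq> {..<n}" and "integrable lborel F1" "integrable lborel F2"
  shows "integrable (out_space n) (\<lambda>z. (\<Prod>i\<in>U. F1 (z i)) * (\<Prod>i\<in>{..<n}-U. F2 (z i)))"
    and "(\<integral>z. (\<Prod>i\<in>U. F1 (z i)) * (\<Prod>i\<in>{..<n}-U. F2 (z i)) \<partial>out_space n) =
       (integral\<^sup>L lborel F1) ^ card U * (integral\<^sup>L lborel F2) ^ (n - card U)"
proof -
  define F where "F i t = (if i \<in> U then F1 t else F2 t)" for i t
  have split: "(\<Prod>i\<in>U. f i) * (\<Prod>i\<in>{..<n}-U. g i) = (\<Prod>i<n. if i \<in> U then f i else g i)"
    for f g :: "nat \<Rightarrow> real"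
    using U prod.subset_diff[of U "{..<n}" "\<lambda>i. if i \<in> U then f i else g i"]
    by (simp add: mult.commute)
  have eq: "(\<lambda>z. (\<Prod>i\<in>U. F1 (z i)) * (\<Prod>i\<in>{..<n}-U. F2 (z i))) = (\<lambda>z. \<Prod>i<n. F i (z i))"
    unfolding split F_def ..
  have F_eq: "F i = (if i \<in> U then F1 else F2)" for i
    by (simp add: F_def fun_eq_iff)
  have F_int: "integrable lborel (F i)" for i
    using assms by (simp add: F_eq)
  have F_integral: "integral\<^sup>L lborel (F i) = (if i \<in> U then integral\<^sup>L lborel F1 else integral\<^sup>L lborel F2)" for i
    by (simp add: F_eq)
  show "integrable (out_space n) (\<lambda>z. (\<Prod>i\<in>U. F1 (z i)) * (\<Prod>i\<in>{..<n}-U. F2 (z i)))"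
    unfolding eq out_space_def by (intro lborel_product.product_integrable_prod) (simp_all add: F_int)
  have "(\<integral>z. (\<Prod>i<n. F i (z i)) \<partial>out_space n) = (\<Prod>i<n. integral\<^sup>L lborel (F i))"
    unfolding out_space_def by (intro lborel_product.product_integral_prod) (simp_all add: F_int)
  also have "\<dots> = (\<Prod>i\<in>U. integral\<^sup>L lborel F1) * (\<Prod>i\<in>{..<n}-U. integral\<^sup>L lborel F2)"
    unfolding split F_integral ..
  also have "\<dots> = (integral\<^sup>L lborel F1) ^ card U * (integral\<^sup>L lborel F2) ^ (n - card U)"
    using U by (simp add: card_Diff_subset finite_subset)
  finally show "(\<integral>z. (\<Prod>i\<in>U. F1 (z i)) * (\<Prod>i\<in>{..<n}-U. F2 (z i)) \<partial>out_space n) =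
       (integral\<^sup>L lborel F1) ^ card U * (integral\<^sup>L lborel F2) ^ (n - card U)"
    unfolding eq .
qed

lemma mean_output_density:
  "integrable (out_space n) (\<lambda>z. \<Prod>i<n. (g_awgn lam False (z i) + g_awgn lam True (z i)) / 2)"
  "(\<integral>z. (\<Prod>i<n. (g_awgn lam False (z i) + g_awgn lam True (z i)) / 2) \<partial>out_space n) = 1"
proof -
  have int: "integrable lborel (\<lambda>t. (g_awgn lam False t + g_awgn lam True t) / 2)"
    by (intro integrable_divide Bochner_Integration.integrable_add integrable_g_awgn)
  have "(\<integral>t. (g_awgn lam False t + g_awgn lam True t) / 2 \<partial>lborel) = 1"
    using integrable_g_awgn by (simp add: integral_g_awgn)
  then show "integrable (out_space n) (\<lambda>z. \<Prod>i<n. (g_awgn lam False (z i) + g_awgn lam True (z i)) / 2)"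
    "(\<integral>z. (\<Prod>i<n. (g_awgn lam False (z i) + g_awgn lam True (z i)) / 2) \<partial>out_space n) = 1"
    unfolding out_space_def
    using lborel_product.product_integrable_prod[of "{..<n}" "\<lambda>_ t. (g_awgn lam False t + g_awgn lam True t) / 2"]
      lborel_product.product_integral_prod[of "{..<n}" "\<lambda>_ t. (g_awgn lam False t + g_awgn lam True t) / 2"] int
    by simp_all
qed


section \<open>The equivocation of the nested code\<close>

locale code_and_dual =
  fixes n :: nat and C :: "(nat \<Rightarrow> bool) set"
  assumes code: "linear_code n C"
begin

sublocale D: binary_linear_code n "dual_code n C"
  by unfold_locales (rule linear_code_dual_code)

lemma card_code_pos: "card C > 0"
  using linear_code_card_pos[OF code] .

lemma card_dual_cosets: "card D.coset_space = card C"
  using D.card_cosets_mult_card card_dual_code_mult_card[OF code]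
    linear_code_card_pos[OF linear_code_dual_code]
  by (metis mult.commute mult_right_cancel not_gr0)

definition coset_lik :: "(nat \<Rightarrow> bool \<Rightarrow> real) \<Rightarrow> (nat \<Rightarrow> bool) set \<Rightarrow> real" where
  "coset_lik G w = (\<Sum>x\<in>w. \<Prod>i<n. G i (x i))"

definition coset_post :: "(nat \<Rightarrow> bool \<Rightarrow> real) \<Rightarrow> (nat \<Rightarrow> bool) set \<Rightarrow> real" where
  "coset_post G w = coset_lik G w / (\<Prod>i<n. G i False + G i True)"

text \<open>The integrand of the equivocation, written for abstract likelihoods G i b (in the
  application G i b = g_awgn lam b (z i)).\<close>

definition equivocation_integrand :: "(nat \<Rightarrow> bool \<Rightarrow> real) \<Rightarrow> real" where
  "equivocation_integrand G = (let M = real (card D.coset_space);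
      pz = (1 / M) * (\<Sum>w\<in>D.coset_space. (1 / real (card w)) * (\<Sum>x\<in>w. \<Prod>i<n. G i (x i)))
    in \<Sum>w\<in>D.coset_space. ((1 / real (card w)) * (\<Sum>x\<in>w. \<Prod>i<n. G i (x i)) / M) *
        (- log 2 (((1 / real (card w)) * (\<Sum>x\<in>w. \<Prod>i<n. G i (x i)) / M) / pz)))"

context
  fixes G :: "nat \<Rightarrow> bool \<Rightarrow> real"
  assumes lik_pos: "\<And>i b. G i b > 0"
begin

lemma prod_lik_sum_pos: "(\<Prod>i<n. G i False + G i True) > 0"
  by (intro prod_pos) (simp add: add_pos_pos lik_pos)

lemma lik_sum_nonzero: "G i False + G i True \<noteq> 0"
  using lik_pos[of i False] lik_pos[of i True] by linarith

lemma coset_post_pos: "w \<in> D.coset_space \<Longrightarrow> coset_post G w > 0"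
  unfolding coset_post_def coset_lik_def using D.finite_coset D.coset_nonempty
  by (intro divide_pos_pos sum_pos prod_pos prod_lik_sum_pos) (auto intro: lik_pos)

lemma sum_coset_post: "(\<Sum>w\<in>D.coset_space. coset_post G w) = 1"
  unfolding coset_post_def sum_divide_distrib[symmetric] coset_lik_def D.sum_cosets sum_vecs_prod
  by (rule divide_self) (use prod_lik_sum_pos in linarith)

lemma equivocation_integrand_eq:
  "equivocation_integrand G = (\<Prod>i<n. (G i False + G i True) / 2) *
     (\<Sum>w\<in>D.coset_space. coset_post G w * (- log 2 (coset_post G w)))"
proof -
  define T where "T = (\<Prod>i<n. G i False + G i True)"
  define d where "d = real (card (dual_code n C))"
  define M where "M = real (card D.coset_space)"
  have "d > 0" unfolding d_def using linear_code_card_pos[OF linear_code_dual_code] by simp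
  have "M * d = 2 ^ n"
    unfolding M_def d_def using D.card_cosets_mult_card by (metis of_nat_mult of_nat_numeral of_nat_power)
  have "T > 0" unfolding T_def by (rule prod_lik_sum_pos)
  have card_w: "real (card w) = d" if "w \<in> D.coset_space" for w
    using D.card_coset[OF that] unfolding d_def by simp
  have pz: "(1 / M) * (\<Sum>w\<in>D.coset_space. (1 / real (card w)) * coset_lik G w) = T / 2 ^ n"
  proof -
    have "(\<Sum>w\<in>D.coset_space. (1 / real (card w)) * coset_lik G w) = (\<Sum>w\<in>D.coset_space. coset_lik G w) / d"
      by (simp add: card_w sum_divide_distrib)
    also have "\<dots> = T / d"
      by (simp add: coset_lik_def D.sum_cosets sum_vecs_prod T_def)
    finally show ?thesis using \<open>M * d = 2 ^ n\<close> by (simp add: field_simps)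
  qed
  have post: "(1 / real (card w)) * coset_lik G w / M = (T / 2 ^ n) * coset_post G w"
    if "w \<in> D.coset_space" for w
    using card_w[OF that] \<open>M * d = 2 ^ n\<close> \<open>d > 0\<close> \<open>T > 0\<close>
    by (simp add: coset_post_def T_def[symmetric] field_simps)
  have "equivocation_integrand G = (\<Sum>w\<in>D.coset_space. ((1 / real (card w)) * coset_lik G w / M) *
      (- log 2 (((1 / real (card w)) * coset_lik G w / M) / (T / 2 ^ n))))"
    unfolding equivocation_integrand_def Let_def M_def[symmetric] coset_lik_def[symmetric]
    by (simp only: pz)
  also have "\<dots> = (\<Sum>w\<in>D.coset_space. (T / 2 ^ n) * (coset_post G w * (- log 2 (coset_post G w))))"
  proof (intro sum.cong refl)
    fix w assume "w \<in> D.coset_space"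
    moreover have "T / 2 ^ n \<noteq> 0" using \<open>T > 0\<close> by simp
    ultimately show "((1 / real (card w)) * coset_lik G w / M) *
        (- log 2 (((1 / real (card w)) * coset_lik G w / M) / (T / 2 ^ n)))
      = (T / 2 ^ n) * (coset_post G w * (- log 2 (coset_post G w)))"
      by (simp only: post) simp
  qed
  also have "\<dots> = (T / 2 ^ n) * (\<Sum>w\<in>D.coset_space. coset_post G w * (- log 2 (coset_post G w)))"
    by (simp add: sum_distrib_left)
  also have "T / 2 ^ n = (\<Prod>i<n. (G i False + G i True) / 2)"
    by (simp add: T_def prod_dividef)
  finally show ?thesis .
qed

lemma equivocation_integrand_le:
  "equivocation_integrand G \<le> (\<Prod>i<n. (G i False + G i True) / 2) * log 2 (real (card C))"
proof -
  define M where "M = real (card C)"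
  have "M > 0" unfolding M_def using card_code_pos by simp
  have "(\<Sum>w\<in>D.coset_space. coset_post G w * (- log 2 (coset_post G w)))
      \<le> (\<Sum>w\<in>D.coset_space. coset_post G w * (- log 2 (1 / M)))"
    using D.finite_cosets sum_coset_post coset_post_pos \<open>M > 0\<close>
    by (intro gibbs_inequality) (auto simp: less_imp_le M_def card_dual_cosets)
  also have "\<dots> = log 2 M"
    using \<open>M > 0\<close> by (simp add: sum_distrib_right[symmetric] sum_coset_post log_divide)
  finally have "(\<Sum>w\<in>D.coset_space. coset_post G w * (- log 2 (coset_post G w))) \<le> log 2 M" .
  moreover have "0 \<le> (\<Prod>i<n. (G i False + G i True) / 2)"
    by (intro prod_nonneg) (simp add: add_nonneg_nonneg less_imp_le lik_pos)
  ultimately show ?thesis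
    unfolding equivocation_integrand_eq M_def by (rule mult_left_mono)
qed

lemma coset_lik_expand:
  assumes "w \<in> D.coset_space"
  shows "coset_lik G w = (\<Sum>U\<in>Pow {..<n}. ((\<Prod>i\<in>U. lik_gap G i) * (\<Prod>i\<in>{..<n}-U. lik_min G i))
    * real (card {x\<in>w. \<forall>i\<in>U. x i = ml_bit G i}))"
proof -
  have "coset_lik G w = (\<Sum>U\<in>Pow {..<n}. \<Sum>x\<in>w.
      (if \<forall>i\<in>U. x i = ml_bit G i then \<Prod>i\<in>U. lik_gap G i else 0) * (\<Prod>i\<in>{..<n}-U. lik_min G i))"
    unfolding coset_lik_def prod_lik_expand by (rule sum.swap)
  also have "\<dots> = (\<Sum>U\<in>Pow {..<n}. ((\<Prod>i\<in>U. lik_gap G i) * (\<Prod>i\<in>{..<n}-U. lik_min G i))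
    * real (card {x\<in>w. \<forall>i\<in>U. x i = ml_bit G i}))"
    using D.finite_coset[OF assms]
    by (intro sum.cong refl) (simp add: if_distrib[of "\<lambda>a. a * _"] sum.If_cases Int_def)
  finally show ?thesis .
qed

lemma cross_entropy_agreeing_ge:
  assumes U: "U \<subseteq> {..<n}"
  shows "2 ^ (n - card U) * (log 2 (real (card C)) - log 2 (real (card (supported_on C U))))
    \<le> (\<Sum>w\<in>D.coset_space. real (card {x\<in>w. \<forall>i\<in>U. x i = ml_bit G i}) * (- log 2 (coset_post G w)))"
proof -
  define m :: real where "m = 2 ^ (n - card U)"
  define k where "k = real (card C)"
  define N where "N = real (card (supported_on C U))"
  define q where "q w = real (card {x\<in>w. \<forall>i\<in>U. x i = ml_bit G i}) / m" for w
  have "m > 0" "k > 0" "N > 0"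
    using card_code_pos card_supported_on_pos[OF code] by (simp_all add: m_def k_def N_def)
  have "real (\<Sum>w\<in>D.coset_space. card {x\<in>w. \<forall>i\<in>U. x i = ml_bit G i}) = m"
    unfolding m_def by (simp only: D.sum_card_cosets_agreeing[OF U]) simp
  then have q_sum: "sum q D.coset_space = 1"
    unfolding q_def sum_divide_distrib[symmetric] using \<open>m > 0\<close> by simp
  have "q w \<le> N / k" if "w \<in> D.coset_space" for w
  proof -
    have "real (card {d\<in>dual_code n C. \<forall>i\<in>U. \<not> d i} * card C)
        = real (2 ^ (n - card U) * card (supported_on C U))"
      by (simp only: card_dual_code_vanishing[OF code U])
    then have "real (card {d\<in>dual_code n C. \<forall>i\<in>U. \<not> d i}) * k = m * N"
      unfolding k_def m_def N_def by simp
    moreover have "real (card {x\<in>w. \<forall>i\<in>U. x i = ml_bit G i}) * k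
        \<le> real (card {d\<in>dual_code n C. \<forall>i\<in>U. \<not> d i}) * k"
      using D.card_coset_agreeing_le[OF that] \<open>k > 0\<close> by (intro mult_right_mono) simp_all
    ultimately have "real (card {x\<in>w. \<forall>i\<in>U. x i = ml_bit G i}) * k \<le> m * N"
      by linarith
    then show ?thesis
      unfolding q_def using \<open>m > 0\<close> \<open>k > 0\<close> by (simp add: field_simps)
  qed
  then have "- log 2 (N / k) \<le> (\<Sum>w\<in>D.coset_space. q w * (- log 2 (q w)))"
    using q_sum \<open>N > 0\<close> \<open>k > 0\<close> by (intro entropy_ge_of_le) (auto simp: q_def m_def)
  also have "\<dots> \<le> (\<Sum>w\<in>D.coset_space. q w * (- log 2 (coset_post G w)))"
    using D.finite_cosets q_sum sum_coset_post coset_post_pos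
    by (intro gibbs_inequality) (auto simp: q_def m_def less_imp_le)
  finally have "m * (log 2 k - log 2 N) \<le> m * (\<Sum>w\<in>D.coset_space. q w * (- log 2 (coset_post G w)))"
    using \<open>m > 0\<close> \<open>N > 0\<close> \<open>k > 0\<close> by (simp add: log_divide)
  then show ?thesis
    using \<open>m > 0\<close> unfolding q_def sum_distrib_left by (simp add: m_def k_def N_def)
qed

lemma equivocation_integrand_ge:
  "(\<Sum>U\<in>Pow {..<n}. (\<Prod>i\<in>U. lik_gap G i / 2) * (\<Prod>i\<in>{..<n}-U. lik_min G i) *
      (log 2 (real (card C)) - log 2 (real (card (supported_on C U))))) \<le> equivocation_integrand G"
proof -
  define c where "c U = (\<Prod>i\<in>U. lik_gap G i) * (\<Prod>i\<in>{..<n}-U. lik_min G i)" for U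
  define L where "L w = - log 2 (coset_post G w)" for w
  define a where "a U w = real (card {x\<in>w. \<forall>i\<in>U. x i = ml_bit G i})" for U w
  have "c U \<ge> 0" for U
    unfolding c_def lik_gap_def lik_min_def using lik_pos
    by (intro mult_nonneg_nonneg prod_nonneg) (auto intro: less_imp_le)
  have "(\<Prod>i\<in>U. lik_gap G i / 2) * (\<Prod>i\<in>{..<n}-U. lik_min G i) *
      (log 2 (real (card C)) - log 2 (real (card (supported_on C U))))
    \<le> c U / 2 ^ n * (\<Sum>w\<in>D.coset_space. a U w * L w)" if "U \<in> Pow {..<n}" for U
  proof -
    from that have U: "U \<subseteq> {..<n}" and "card U \<le> n"
      by (auto simp: card_mono[of "{..<n}", simplified])
    then have "(\<Prod>i\<in>U. lik_gap G i / 2) * (\<Prod>i\<in>{..<n}-U. lik_min G i)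
        = c U / 2 ^ n * 2 ^ (n - card U)"
      by (simp add: c_def prod_dividef power_diff)
    then have "(\<Prod>i\<in>U. lik_gap G i / 2) * (\<Prod>i\<in>{..<n}-U. lik_min G i) *
        (log 2 (real (card C)) - log 2 (real (card (supported_on C U))))
      = c U / 2 ^ n * (2 ^ (n - card U) *
        (log 2 (real (card C)) - log 2 (real (card (supported_on C U)))))"
      by (simp only: mult.assoc)
    also have "\<dots> \<le> c U / 2 ^ n * (\<Sum>w\<in>D.coset_space. a U w * L w)"
      unfolding a_def L_def
      by (rule mult_left_mono[OF cross_entropy_agreeing_ge[OF U]]) (simp add: \<open>0 \<le> c U\<close>)
    finally show ?thesis .
  qed
  then have "(\<Sum>U\<in>Pow {..<n}. (\<Prod>i\<in>U. lik_gap G i / 2) * (\<Prod>i\<in>{..<n}-U. lik_min G i) *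
      (log 2 (real (card C)) - log 2 (real (card (supported_on C U)))))
    \<le> (\<Sum>U\<in>Pow {..<n}. c U / 2 ^ n * (\<Sum>w\<in>D.coset_space. a U w * L w))"
    by (rule sum_mono)
  also have "\<dots> = (\<Sum>w\<in>D.coset_space. coset_lik G w / 2 ^ n * L w)"
    unfolding sum_distrib_left
    by (subst sum.swap) (simp add: coset_lik_expand c_def a_def
        sum_divide_distrib sum_distrib_right mult.assoc mult.left_commute)
  also have "\<dots> = equivocation_integrand G"
    unfolding equivocation_integrand_eq sum_distrib_left L_def
    by (intro sum.cong refl) (simp add: coset_post_def prod_dividef lik_sum_nonzero)
  finally show ?thesis .
qed

end

end

context code_and_dual
begin

text \<open>The entropy of a uniform codeword of C given its image under the binary erasure
  channel with erasure set E.\<close>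

definition erasure_entropy :: "nat set \<Rightarrow> real" where
  "erasure_entropy E = log 2 (real (card (supported_on C E)))"

lemma erasure_entropy_nonneg: "erasure_entropy E \<ge> 0"
  unfolding erasure_entropy_def using card_supported_on_pos[OF code, of E] by simp

lemma erasure_entropy_le: "erasure_entropy E \<le> log 2 (real (card C))"
  unfolding erasure_entropy_def
  using card_supported_on_pos[OF code, of E] card_supported_on_le[OF code, of E] by simp

lemma erasure_entropy_le_length: "erasure_entropy E \<le> real n"
proof -
  have "card C \<le> card (vecs n)"
    using code finite_vecs unfolding linear_code_def by (intro card_mono) auto
  then have "real (card C) \<le> 2 ^ n"
    unfolding card_vecs by (simp flip: of_nat_power)
  then have "log 2 (real (card C)) \<le> log 2 (2 ^ n)"
    using card_code_pos by (intro log_mono) simp_all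
  then show ?thesis
    using erasure_entropy_le[of E] by simp
qed

lemma unit_increments_erasure_entropy: "unit_increments S erasure_entropy"
  unfolding unit_increments_def
proof (intro allI impI)
  fix E a
  define N where "N = real (card (supported_on C E))"
  define N' where "N' = real (card (supported_on C (insert a E)))"
  have "N > 0"
    unfolding N_def using card_supported_on_pos[OF code] by simp
  have "card (supported_on C E) \<le> card (supported_on C (insert a E))"
    by (rule card_mono[OF linear_code_finite[OF linear_code_supported_on[OF code]]])
      (auto simp: supported_on_def)
  then have "N \<le> N'" unfolding N_def N'_def by simp
  moreover have "N' \<le> 2 * N"
    unfolding N_def N'_def using card_supported_on_insert_le[OF code, of a E] by simp
  ultimately have "log 2 N \<le> log 2 N'" "log 2 N' \<le> log 2 (2 * N)"
    using \<open>N > 0\<close> by simp_all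
  moreover have "log 2 (2 * N) = log 2 N + 1"
    using \<open>N > 0\<close> by (simp add: log_mult)
  ultimately show "erasure_entropy E \<le> erasure_entropy (insert a E) \<and>
      erasure_entropy (insert a E) \<le> erasure_entropy E + 1"
    unfolding erasure_entropy_def N_def N'_def by simp
qed

lemma bec_word_error_eq:
  "bec_word_error n C d = bernoulli_avg {..<n} (\<lambda>E. 1 - 1 / real (card (supported_on C E))) d"
proof -
  have "(1 / real (card C)) * (\<Sum>x\<in>C. 1 - 1 / real (card {c\<in>C. \<forall>i<n. i \<notin> E \<longrightarrow> c i = x i}))
      = 1 - 1 / real (card (supported_on C E))" for E
    using card_code_pos
    by (simp add: consistent_codewords_eq[OF code] card_image inj_on_vxor)
  then show ?thesis unfolding bec_word_error_def bernoulli_avg_def by simp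
qed

lemma bec_word_error_zero: "bec_word_error n C 0 = 0"
  unfolding bec_word_error_eq by (simp add: bernoulli_avg_zero supported_on_empty[OF code])

lemma erasure_entropy_avg_le_bec:
  assumes "0 \<le> d" "d \<le> 1"
  shows "bernoulli_avg {..<n} erasure_entropy d \<le> 2 * real n * bec_word_error n C d"
proof -
  have "erasure_entropy E \<le> 2 * real n * (1 - 1 / real (card (supported_on C E)))" for E
  proof (cases "card (supported_on C E) = 1")
    case True
    then show ?thesis by (simp add: erasure_entropy_def)
  next
    case False
    then have "real (card (supported_on C E)) \<ge> 2"
      using card_supported_on_pos[OF code, of E] by linarith
    then have "1 / 2 \<le> 1 - 1 / real (card (supported_on C E))"
      by (simp add: field_simps)
    then have "2 * real n * (1 / 2) \<le> 2 * real n * (1 - 1 / real (card (supported_on C E)))"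
      by (intro mult_left_mono) auto
    then have "real n \<le> 2 * real n * (1 - 1 / real (card (supported_on C E)))"
      by simp
    then show ?thesis using erasure_entropy_le_length[of E] by linarith
  qed
  then have "bernoulli_avg {..<n} erasure_entropy d
      \<le> bernoulli_avg {..<n} (\<lambda>E. 2 * real n * (1 - 1 / real (card (supported_on C E)))) d"
    using assms by (intro bernoulli_avg_mono) auto
  also have "\<dots> = 2 * real n * bec_word_error n C d"
    unfolding bec_word_error_eq bernoulli_avg_def by (simp add: sum_distrib_left algebra_simps)
  finally show ?thesis .
qed

lemma erasure_entropy_avg_nonneg:
  "0 \<le> d \<Longrightarrow> d \<le> 1 \<Longrightarrow> 0 \<le> bernoulli_avg {..<n} erasure_entropy d"
  using bernoulli_avg_mono[of d "{..<n}" "\<lambda>_. 0" erasure_entropy] erasure_entropy_nonneg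
  by (simp add: bernoulli_avg_const)

lemma erasure_entropy_avg_le_shift:
  assumes "0 \<le> \<alpha>" "\<alpha> \<le> 1" "0 \<le> d" "d \<le> 1"
  shows "bernoulli_avg {..<n} erasure_entropy \<alpha> \<le> 2 * real n * bec_word_error n C d + real n * max 0 (\<alpha> - d)"
proof -
  have incr: "bernoulli_avg {..<n} erasure_entropy x \<le> bernoulli_avg {..<n} erasure_entropy x' \<and>
      bernoulli_avg {..<n} erasure_entropy x' \<le> bernoulli_avg {..<n} erasure_entropy x + real n * (x' - x)"
    if "0 \<le> x" "x \<le> x'" "x' \<le> 1" for x x'
    using bernoulli_avg_increments[OF finite_lessThan unit_increments_erasure_entropy that] by simp
  have "bernoulli_avg {..<n} erasure_entropy \<alpha> \<le> bernoulli_avg {..<n} erasure_entropy d + real n * max 0 (\<alpha> - d)"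
  proof (cases "\<alpha> \<le> d")
    case True
    then show ?thesis using incr[of \<alpha> d] assms by (simp add: max_def)
  next
    case False
    then show ?thesis using incr[of d \<alpha>] assms by (simp add: max_def)
  qed
  then show ?thesis
    using erasure_entropy_avg_le_bec[OF assms(3,4)] by linarith
qed

lemma nested_rate_vecs_dual: "nested_rate n (vecs n) (dual_code n C) = code_rate n C"
proof -
  have "real (card (dual_code n C) * card C) = real (2 ^ n)"
    by (simp only: card_dual_code_mult_card[OF code])
  then have "real (card (dual_code n C)) * real (card C) = 2 ^ n"
    by simp
  moreover have "log 2 (real (card (dual_code n C)) * real (card C))
      = log 2 (real (card (dual_code n C))) + log 2 (real (card C))"
    using card_code_pos linear_code_card_pos[OF linear_code_dual_code] by (simp add: log_mult)
  ultimately have "log 2 (real (card (vecs n))) = log 2 (real (card (dual_code n C))) + log 2 (real (card C))"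
    by (simp add: card_vecs)
  then show ?thesis
    unfolding nested_rate_def code_rate_def by (simp add: diff_divide_distrib[symmetric])
qed

end

context code_and_dual
begin

lemma equivocation_eq_integral:
  "equivocation lam n (vecs n) (dual_code n C) = (\<integral>z. equivocation_integrand (awgn_lik lam z) \<partial>out_space n)"
  unfolding equivocation_def equivocation_integrand_def msg_density_def word_density_def awgn_lik_def Let_def ..

definition equivocation_lower :: "real \<Rightarrow> (nat \<Rightarrow> real) \<Rightarrow> real" where
  "equivocation_lower lam z = (\<Sum>U\<in>Pow {..<n}. (\<Prod>i\<in>U. awgn_gap lam (z i) / 2) *
     (\<Prod>i\<in>{..<n}-U. awgn_min lam (z i)) * (log 2 (real (card C)) - erasure_entropy U))"

definition equivocation_upper :: "real \<Rightarrow> (nat \<Rightarrow> real) \<Rightarrow> real" where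
  "equivocation_upper lam z =
     (\<Prod>i<n. (g_awgn lam False (z i) + g_awgn lam True (z i)) / 2) * log 2 (real (card C))"

lemma equivocation_integrand_bounds:
  "equivocation_lower lam z \<le> equivocation_integrand (awgn_lik lam z)"
  "equivocation_integrand (awgn_lik lam z) \<le> equivocation_upper lam z"
  "0 \<le> equivocation_lower lam z"
proof -
  have pos: "\<And>i b. awgn_lik lam z i b > 0" by (simp add: awgn_lik_def g_awgn_pos)
  show "equivocation_lower lam z \<le> equivocation_integrand (awgn_lik lam z)"
    using equivocation_integrand_ge[where G="awgn_lik lam z", OF pos]
    unfolding equivocation_lower_def lik_min_awgn_lik lik_gap_awgn_lik erasure_entropy_def .
  show "equivocation_integrand (awgn_lik lam z) \<le> equivocation_upper lam z"
    using equivocation_integrand_le[where G="awgn_lik lam z", OF pos] unfolding equivocation_upper_def awgn_lik_def .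
  show "0 \<le> equivocation_lower lam z"
    unfolding equivocation_lower_def using erasure_entropy_le awgn_min_nonneg
    by (intro sum_nonneg mult_nonneg_nonneg prod_nonneg) (auto simp: awgn_gap_def)
qed

lemma integrable_equivocation_lower: "integrable (out_space n) (equivocation_lower lam)"
  unfolding equivocation_lower_def
  by (intro Bochner_Integration.integrable_sum integrable_mult_left product_integral_split(1)
      integrable_divide integrable_awgn_gap integrable_awgn_min) auto

lemma integral_equivocation_lower:
  "(\<integral>z. equivocation_lower lam z \<partial>out_space n) =
     log 2 (real (card C)) - bernoulli_avg {..<n} erasure_entropy (\<integral>t. awgn_gap lam t / 2 \<partial>lborel)"
proof -
  define \<alpha> where "\<alpha> = (\<integral>t. awgn_gap lam t / 2 \<partial>lborel)"
  have one_minus: "(\<integral>t. awgn_min lam t \<partial>lborel) = 1 - \<alpha>"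
    using integral_awgn_gap_min[of lam] unfolding \<alpha>_def by simp
  have int: "integrable lborel (\<lambda>t. awgn_gap lam t / 2)"
    by (intro integrable_divide integrable_awgn_gap)
  have "(\<integral>z. equivocation_lower lam z \<partial>out_space n) = (\<Sum>U\<in>Pow {..<n}.
      \<alpha> ^ card U * (1 - \<alpha>) ^ (n - card U) * (log 2 (real (card C)) - erasure_entropy U))"
    unfolding equivocation_lower_def
    using product_integral_split[OF _ int integrable_awgn_min] one_minus
    by (subst Bochner_Integration.integral_sum)
      (auto intro!: sum.cong integrable_mult_left simp: \<alpha>_def)
  also have "\<dots> = log 2 (real (card C)) - bernoulli_avg {..<n} erasure_entropy \<alpha>"
    using bernoulli_avg_const[of "{..<n}" "log 2 (real (card C))" \<alpha>]
      bernoulli_avg_diff[of "{..<n}" "\<lambda>_. log 2 (real (card C))" erasure_entropy \<alpha>]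
    by (simp add: bernoulli_avg_def)
  finally show ?thesis unfolding \<alpha>_def .
qed

lemma equivocation_bounds:
  "log 2 (real (card C)) - bernoulli_avg {..<n} erasure_entropy (\<integral>t. awgn_gap lam t / 2 \<partial>lborel)
     \<le> equivocation lam n (vecs n) (dual_code n C)"
  "equivocation lam n (vecs n) (dual_code n C) \<le> log 2 (real (card C))"
proof -
  have upper_int: "integrable (out_space n) (equivocation_upper lam)"
    unfolding equivocation_upper_def by (intro integrable_mult_left mean_output_density(1))
  have "(\<lambda>z. equivocation_integrand (awgn_lik lam z)) \<in> borel_measurable (out_space n)"
    unfolding equivocation_integrand_def awgn_lik_def Let_def out_space_def by measurable
  moreover have "norm (equivocation_integrand (awgn_lik lam z)) \<le> norm (equivocation_upper lam z)" for z
  proof -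
    have "0 \<le> equivocation_integrand (awgn_lik lam z)" "0 \<le> equivocation_upper lam z"
      using equivocation_integrand_bounds[of lam z] by linarith+
    then show ?thesis using equivocation_integrand_bounds(2)[of lam z] by simp
  qed
  ultimately have int: "integrable (out_space n) (\<lambda>z. equivocation_integrand (awgn_lik lam z))"
    by (intro Bochner_Integration.integrable_bound[OF upper_int]) auto
  show "log 2 (real (card C)) - bernoulli_avg {..<n} erasure_entropy (\<integral>t. awgn_gap lam t / 2 \<partial>lborel)
      \<le> equivocation lam n (vecs n) (dual_code n C)"
    unfolding equivocation_eq_integral integral_equivocation_lower[symmetric]
    using integrable_equivocation_lower int equivocation_integrand_bounds(1) by (rule integral_mono)
  show "equivocation lam n (vecs n) (dual_code n C) \<le> log 2 (real (card C))"
    using integral_mono[OF int upper_int equivocation_integrand_bounds(2)] mean_output_density(2)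
    by (simp add: equivocation_eq_integral equivocation_upper_def)
qed

end

section \<open>Asymptotics\<close>

lemma erasure_threshold_le_one:
  assumes codes: "\<And>n. linear_code n (C n)"
  shows "erasure_threshold C \<le> 1"
proof -
  have "0 \<in> {d\<in>{0..1}. (\<lambda>n. bec_word_error n (C n) d) \<longlonglongrightarrow> 0}"
    using code_and_dual.bec_word_error_zero[OF code_and_dual.intro[OF codes]] by simp
  then show ?thesis
    unfolding erasure_threshold_def by (intro cSup_least) (blast, simp)
qed

lemma erasure_threshold_approx:
  assumes codes: "\<And>n. linear_code n (C n)" and "\<alpha> \<le> erasure_threshold C" "r > 0"
  obtains d where "0 \<le> d" "d \<le> 1" "\<alpha> - r < d" "(\<lambda>n. bec_word_error n (C n) d) \<longlonglongrightarrow> 0"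
proof -
  define S where "S = {d\<in>{0..1}. (\<lambda>n. bec_word_error n (C n) d) \<longlonglongrightarrow> 0}"
  have "0 \<in> S" "bdd_above S"
    unfolding S_def bdd_above_def
    using code_and_dual.bec_word_error_zero[OF code_and_dual.intro[OF codes]] by auto
  moreover have "\<alpha> - r < Sup S"
    using assms(2,3) unfolding erasure_threshold_def S_def by simp
  ultimately obtain d where "d \<in> S" "\<alpha> - r < d"
    using less_cSup_iff[of S] by blast
  then show ?thesis using that unfolding S_def by auto
qed

lemma erasure_entropy_rate_tendsto_zero:
  assumes codes: "\<And>n. linear_code n (C n)"
    and "0 \<le> \<alpha>" and below: "\<alpha> \<le> erasure_threshold C"
  shows "(\<lambda>n. bernoulli_avg {..<n} (code_and_dual.erasure_entropy (C n)) \<alpha> / real n) \<longlonglongrightarrow> 0"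
proof (rule LIMSEQ_I)
  fix r :: real assume "r > 0"
  interpret code_and_dual n "C n" for n by unfold_locales (rule codes)
  have "\<alpha> \<le> 1"
    using below erasure_threshold_le_one[OF codes] by simp
  obtain d where d: "0 \<le> d" "d \<le> 1" "\<alpha> - r / 2 < d"
    and bec: "(\<lambda>n. bec_word_error n (C n) d) \<longlonglongrightarrow> 0"
    using erasure_threshold_approx[OF codes below, of "r / 2"] \<open>r > 0\<close> by auto
  obtain n0 where n0: "\<And>n. n \<ge> n0 \<Longrightarrow> \<bar>bec_word_error n (C n) d\<bar> < r / 4"
    using LIMSEQ_D[OF bec, of "r / 4"] \<open>r > 0\<close> by fastforce
  have "norm (bernoulli_avg {..<n} (erasure_entropy n) \<alpha> / real n - 0) < r" if "n \<ge> Suc n0" for n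
  proof -
    have "real n > 0" using that by simp
    have "2 * bec_word_error n (C n) d + max 0 (\<alpha> - d) < r"
      using n0[of n] that d(3) by (auto simp: max_def)
    then have "real n * (2 * bec_word_error n (C n) d + max 0 (\<alpha> - d)) < real n * r"
      using \<open>real n > 0\<close> by (rule mult_strict_left_mono)
    then have "bernoulli_avg {..<n} (erasure_entropy n) \<alpha> < real n * r"
      using erasure_entropy_avg_le_shift[where n=n, OF \<open>0 \<le> \<alpha>\<close> \<open>\<alpha> \<le> 1\<close> d(1,2)]
      by (simp add: algebra_simps)
    then show ?thesis
      using erasure_entropy_avg_nonneg[where n=n, OF \<open>0 \<le> \<alpha>\<close> \<open>\<alpha> \<le> 1\<close>] \<open>real n > 0\<close>
      by (simp add: field_simps)
  qed
  then show "\<exists>n0. \<forall>n\<ge>n0. norm (bernoulli_avg {..<n} (erasure_entropy n) \<alpha> / real n - 0) < r"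
    by blast
qed

lemma equivocation_rate_tendsto:
  assumes codes: "\<And>n. linear_code n (C n)"
    and rate: "(\<lambda>n. code_rate n (C n)) \<longlonglongrightarrow> R"
    and below: "(\<integral>t. awgn_gap lam t / 2 \<partial>lborel) \<le> erasure_threshold C"
  shows "(\<lambda>n. equivocation lam n (vecs n) (dual_code n (C n)) / real n) \<longlonglongrightarrow> R"
proof (rule tendsto_sandwich)
  interpret code_and_dual n "C n" for n by unfold_locales (rule codes)
  define \<alpha> where "\<alpha> = (\<integral>t. awgn_gap lam t / 2 \<partial>lborel)"
  have "0 \<le> \<alpha>" unfolding \<alpha>_def by (intro integral_nonneg_AE) (simp add: awgn_gap_def)
  have rate': "(\<lambda>n. log 2 (real (card (C n))) / real n) \<longlonglongrightarrow> R"
    using rate unfolding code_rate_def .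
  show "\<forall>\<^sub>F n in sequentially. log 2 (real (card (C n))) / real n
      - bernoulli_avg {..<n} (erasure_entropy n) \<alpha> / real n \<le> equivocation lam n (vecs n) (dual_code n (C n)) / real n"
    using equivocation_bounds(1) unfolding \<alpha>_def
    by (intro always_eventually allI) (simp add: diff_divide_distrib[symmetric] divide_right_mono)
  show "\<forall>\<^sub>F n in sequentially. equivocation lam n (vecs n) (dual_code n (C n)) / real n
      \<le> log 2 (real (card (C n))) / real n"
    using equivocation_bounds(2) by (intro always_eventually allI) (simp add: divide_right_mono)
  show "(\<lambda>n. log 2 (real (card (C n))) / real n - bernoulli_avg {..<n} (erasure_entropy n) \<alpha> / real n)
      \<longlonglongrightarrow> R"
    using tendsto_diff[OF rate' erasure_entropy_rate_tendsto_zero[OF codes \<open>0 \<le> \<alpha>\<close> below[folded \<alpha>_def]]]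
    by simp
qed (use rate in \<open>simp add: code_rate_def\<close>)

theorem corollary2:
  fixes lam R :: real and C :: "nat \<Rightarrow> (nat \<Rightarrow> bool) set"
  assumes "lam > 0"
    and "0 < R" and "R < 1"
    and "R \<le> 2 * Qfun (sqrt (2 * lam))"
    and "\<And>n. linear_code n (C n)"
    and "(\<lambda>n. code_rate n (C n)) \<longlonglongrightarrow> R"
    and "erasure_threshold C = 1 - R"
  shows "achievable_nested lam vecs (\<lambda>n. dual_code n (C n)) R R"
proof -
  interpret code_and_dual n "C n" for n by unfold_locales (rule assms(5))
  have "(\<integral>t. awgn_gap lam t / 2 \<partial>lborel) = 1 - 2 * Qfun (sqrt (2 * lam))"
    using integral_awgn_gap_min[of lam] integral_awgn_min[of lam] assms(1) by simp
  then have "(\<integral>t. awgn_gap lam t / 2 \<partial>lborel) \<le> erasure_threshold C"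
    using assms(4,7) by simp
  then have "(\<lambda>n. equivocation lam n (vecs n) (dual_code n (C n)) / real n) \<longlonglongrightarrow> R"
    using equivocation_rate_tendsto[OF assms(5,6)] by blast
  moreover have "(\<lambda>n. nested_rate n (vecs n) (dual_code n (C n))) \<longlonglongrightarrow> R"
    using assms(6) by (simp add: nested_rate_vecs_dual)
  moreover have "legit_error (vecs n) (dual_code n (C n)) = 0" for n
    by (rule D.legit_error_vecs)
  ultimately show ?thesis
    unfolding achievable_nested_def by (auto simp: convergent_def limI)
qed

end
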